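(* Let $\Delta=O(1)$. Suppose there is a deterministic $\mathsf{VOLUME}$ algorithm $\mathcal{A}$ that solves Sinkless Orientation on $n$-node trees of maximum degree $\Delta$ that are properly $\Delta$-edge colored, relative to $H(n,\Delta)$, with probe complexity $f(n)\le n/(3\Delta)$ for all sufficiently large $n$. Then there exist a constant $n^*$ and a deterministic $\mathsf{LOCAL}$ algorithm $\mathcal{A}'$ that solves Sinkless Orientation on all (possibly infinite) trees of maximum degree $\Delta$ that are properly $\Delta$-edge colored and properly $H(n^*,\Delta)$-labeled, in fewer than $n^*$ rounds.
   Context: Sinkless Orientation: orient every edge so that every vertex of sufficiently high constant degree has at least one outgoing edge (outputs at the two endpoints of an edge must be consistent). An ID graph $H(R,\Delta)$ is a collection of graphs $H_1,\dots,H_\Delta$ on a common vertex set $V(H)$ with $|V(H)|=\Delta^{10R}$, $1\le\deg_{H_i}(v)\le\Delta^{10}$ for all $v,i$, the union multigraph of the $H_i$ having girth at least $10R$, and every independent set of each $H_i$ having fewer than $|V(H)|/\Delta$ vertices; $H(R,\Delta)$ denotes the lexicographically smallest such ID graph (assumed to exist). For a tree $T$ with a proper edge coloring by $[\Delta]$, a proper $H$-labeling is a map $h:V(T)\to V(H)$ with $h(u)h(v)\in E(H_c)$ whenever $uv$ is an edge of color $c$. An algorithm works relative to $H(n,\Delta)$ if it is correct on every $n$-node input in which the unique identifiers are replaced by a proper $H(n,\Delta)$-labeling. Deterministic $\mathsf{VOLUME}$ model: the algorithm (knowing $n$) probes only neighbors of already discovered nodes starting from the queried node, each probe returning the node's label,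 degree and input; must always be correct; complexity is the maximum number of probes. Deterministic $\mathsf{LOCAL}$ model: in synchronous rounds, each node performs unbounded local computation and exchanges unbounded messages with its neighbors; an algorithm with $t$ rounds determines each node's output from its $t$-hop neighborhood (topology, labels, inputs). *)

theory Defs
  imports Complex_Main
begin

text \<open>An ID graph is given as H :: nat => nat => nat => bool, where H i u v means that
 uv is an edge of the graph H_i.
 We require H i to be empty outside i in {1..Delta} and outside the vertex set
 (canonical representation, so that the lexicographically smallest one is unique).\<close>

definition idg_size :: "nat \<Rightarrow> nat \<Rightarrow> nat" where
  "idg_size R \<Delta> = \<Delta> ^ (10 * R)"

definition is_ID_graph :: "nat \<Rightarrow> nat \<Rightarrow> (nat \<Rightarrow> nat \<Rightarrow> nat \<Rightarrow> bool) \<Rightarrow> bool" where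
  "is_ID_graph R \<Delta> H \<longleftrightarrow>
     (let N = idg_size R \<Delta> in
      \<comment> \<open>canonical support: simple graphs H_1..H_Delta on vertex set {0..<N}\<close>
      (\<forall>i u v. H i u v \<longrightarrow> i \<in> {1..\<Delta>} \<and> u < N \<and> v < N) \<and>
      (\<forall>i u v. H i u v \<longrightarrow> H i v u) \<and>
      (\<forall>i u. \<not> H i u u) \<and>
      \<comment> \<open>degree bounds\<close>
      (\<forall>i\<in>{1..\<Delta>}. \<forall>v<N. 1 \<le> card {u. H i v u} \<and> card {u. H i v u} \<le> \<Delta> ^ 10) \<and>
      \<comment> \<open>union multigraph has girth at least 10R: no cycle of length k < 10R
          (a cycle of length 2 consists of two distinct parallel edges)\<close>
      (\<forall>k xs cs. 2 \<le> k \<and> k < 10 * R \<and> length xs = k \<and> length cs = k \<and> distinct xs \<and>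
          (\<forall>j<k. H (cs ! j) (xs ! j) (xs ! ((j + 1) mod k))) \<longrightarrow>
          \<not> inj_on (\<lambda>j. (cs ! j, {xs ! j, xs ! ((j + 1) mod k)})) {..<k}) \<and>
      \<comment> \<open>every independent set of each H_i has fewer than N/Delta vertices\<close>
      (\<forall>i\<in>{1..\<Delta>}. \<forall>I. I \<subseteq> {0..<N} \<and> (\<forall>u\<in>I. \<forall>v\<in>I. \<not> H i u v) \<longrightarrow>
          real (card I) < real N / real \<Delta>))"

definition idg_encode :: "nat \<Rightarrow> nat \<Rightarrow> (nat \<Rightarrow> nat \<Rightarrow> nat \<Rightarrow> bool) \<Rightarrow> bool list" where
  "idg_encode R \<Delta> H =
     [H i u v. i \<leftarrow> [1..<\<Delta> + 1], u \<leftarrow> [0..<idg_size R \<Delta>], v \<leftarrow> [0..<idg_size R \<Delta>]]"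

definition Hid :: "nat \<Rightarrow> nat \<Rightarrow> (nat \<Rightarrow> nat \<Rightarrow> nat \<Rightarrow> bool)" where
  "Hid R \<Delta> = (THE H. is_ID_graph R \<Delta> H \<and>
       (\<forall>H'. is_ID_graph R \<Delta> H' \<longrightarrow> lexordp_eq (idg_encode R \<Delta> H) (idg_encode R \<Delta> H')))"

text \<open>A graph is given by a vertex set V and a symmetric edge relation E; col u w is the
 colour of edge uw. Ports are identified with edge colours.\<close>

definition walk_path :: "('v \<Rightarrow> 'v \<Rightarrow> bool) \<Rightarrow> 'v list \<Rightarrow> bool" where
  "walk_path E xs \<longleftrightarrow> (\<forall>j. Suc j < length xs \<longrightarrow> E (xs ! j) (xs ! Suc j))"

definition is_tree :: "'v set \<Rightarrow> ('v \<Rightarrow> 'v \<Rightarrow> bool) \<Rightarrow> bool" where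
  "is_tree V E \<longleftrightarrow>
     (\<forall>u w. E u w \<longrightarrow> u \<in> V \<and> w \<in> V) \<and>
     (\<forall>u w. E u w \<longrightarrow> E w u) \<and>
     (\<forall>u. \<not> E u u) \<and>
     (\<forall>u\<in>V. \<forall>w\<in>V. \<exists>xs. xs \<noteq> [] \<and> hd xs = u \<and> last xs = w \<and> walk_path E xs) \<and>
     (\<nexists>xs. 3 \<le> length xs \<and> distinct xs \<and> walk_path E xs \<and> E (last xs) (hd xs))"

definition max_deg_le :: "'v set \<Rightarrow> ('v \<Rightarrow> 'v \<Rightarrow> bool) \<Rightarrow> nat \<Rightarrow> bool" where
  "max_deg_le V E \<Delta> \<longleftrightarrow> (\<forall>u\<in>V. finite {w. E u w} \<and> card {w. E u w} \<le> \<Delta>)"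

definition proper_edge_col :: "('v \<Rightarrow> 'v \<Rightarrow> bool) \<Rightarrow> ('v \<Rightarrow> 'v \<Rightarrow> nat) \<Rightarrow> nat \<Rightarrow> bool" where
  "proper_edge_col E col \<Delta> \<longleftrightarrow>
     (\<forall>u w. E u w \<longrightarrow> col u w = col w u \<and> col u w \<in> {1..\<Delta>}) \<and>
     (\<forall>u w w'. E u w \<and> E u w' \<and> col u w = col u w' \<longrightarrow> w = w')"

definition proper_H_labeling ::
  "(nat \<Rightarrow> nat \<Rightarrow> nat \<Rightarrow> bool) \<Rightarrow> nat \<Rightarrow> nat \<Rightarrow> 'v set \<Rightarrow> ('v \<Rightarrow> 'v \<Rightarrow> bool) \<Rightarrow>
   ('v \<Rightarrow> 'v \<Rightarrow> nat) \<Rightarrow> ('v \<Rightarrow> nat) \<Rightarrow> bool" where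
  "proper_H_labeling H R \<Delta> V E col h \<longleftrightarrow>
     (\<forall>u\<in>V. h u < idg_size R \<Delta>) \<and> (\<forall>u w. E u w \<longrightarrow> H (col u w) (h u) (h w))"

definition colors :: "('v \<Rightarrow> 'v \<Rightarrow> bool) \<Rightarrow> ('v \<Rightarrow> 'v \<Rightarrow> nat) \<Rightarrow> 'v \<Rightarrow> nat set" where
  "colors E col u = {c. \<exists>w. E u w \<and> col u w = c}"

definition nbr :: "('v \<Rightarrow> 'v \<Rightarrow> bool) \<Rightarrow> ('v \<Rightarrow> 'v \<Rightarrow> nat) \<Rightarrow> 'v \<Rightarrow> nat \<Rightarrow> 'v option" where
  "nbr E col u c = (if \<exists>w. E u w \<and> col u w = c then Some (THE w. E u w \<and> col u w = c) else None)"

text \<open>What a node reveals: its label and its input (colours of incident edges, hence degree).\<close>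
definition obs :: "('v \<Rightarrow> 'v \<Rightarrow> bool) \<Rightarrow> ('v \<Rightarrow> 'v \<Rightarrow> nat) \<Rightarrow> ('v \<Rightarrow> nat) \<Rightarrow> 'v \<Rightarrow> nat \<times> nat set" where
  "obs E col h u = (h u, colors E col u)"

text \<open>Output of node u: the set S u of colours of its incident edges oriented outwards.
 d is the (constant) degree threshold above which a node may not be a sink.\<close>
definition sinkless_orientation ::
  "nat \<Rightarrow> 'v set \<Rightarrow> ('v \<Rightarrow> 'v \<Rightarrow> bool) \<Rightarrow> ('v \<Rightarrow> 'v \<Rightarrow> nat) \<Rightarrow> ('v \<Rightarrow> nat set) \<Rightarrow> bool" where
  "sinkless_orientation d V E col S \<longleftrightarrow>
     (\<forall>u\<in>V. S u \<subseteq> colors E col u) \<and>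
     (\<forall>u w. E u w \<longrightarrow> (col u w \<in> S u \<longleftrightarrow> col u w \<notin> S w)) \<and>
     (\<forall>u\<in>V. d \<le> card {w. E u w} \<longrightarrow> S u \<noteq> {})"

datatype vaction = VProbe nat nat  \<comment> \<open>index of discovered node, port (colour)\<close>
                 | VOutput "nat set"

type_synonym volume_alg = "nat \<Rightarrow> (nat \<times> nat set) list \<Rightarrow> vaction"

text \<open>Execution with a budget of k probes, starting from the list of discovered nodes us.
 None = exceeded budget or illegal probe.\<close>
fun vexec :: "volume_alg \<Rightarrow> nat \<Rightarrow> ('v \<Rightarrow> 'v \<Rightarrow> bool) \<Rightarrow> ('v \<Rightarrow> 'v \<Rightarrow> nat) \<Rightarrow> ('v \<Rightarrow> nat) \<Rightarrow>
               nat \<Rightarrow> 'v list \<Rightarrow> nat set option" where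
  "vexec A n E col h 0 us =
     (case A n (map (obs E col h) us) of VOutput S \<Rightarrow> Some S | VProbe i c \<Rightarrow> None)"
| "vexec A n E col h (Suc k) us =
     (case A n (map (obs E col h) us) of
        VOutput S \<Rightarrow> Some S
      | VProbe i c \<Rightarrow>
          (if i < length us then
             (case nbr E col (us ! i) c of
                Some w \<Rightarrow> vexec A n E col h k (us @ [w])
              | None \<Rightarrow> None)
           else None))"

text \<open>A solves sinkless orientation (threshold d) on n-node trees of max degree Delta,
 properly Delta-edge coloured, relative to H(n,Delta), with probe complexity f.
 (Finite trees are w.l.o.g. on vertices of type nat.)\<close>
definition volume_solves_SO :: "volume_alg \<Rightarrow> (nat \<Rightarrow> nat) \<Rightarrow> nat \<Rightarrow> nat \<Rightarrow> bool" where
  "volume_solves_SO A f d \<Delta> \<longleftrightarrow>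
     (\<forall>n (V :: nat set) E col h.
        finite V \<and> card V = n \<and> is_tree V E \<and> max_deg_le V E \<Delta> \<and> proper_edge_col E col \<Delta> \<and>
        proper_H_labeling (Hid n \<Delta>) n \<Delta> V E col h \<longrightarrow>
        (\<forall>v\<in>V. vexec A n E col h (f n) [v] \<noteq> None) \<and>
        sinkless_orientation d V E col (\<lambda>v. the (vexec A n E col h (f n) [v])))"

fun walk :: "('v \<Rightarrow> 'v \<Rightarrow> bool) \<Rightarrow> ('v \<Rightarrow> 'v \<Rightarrow> nat) \<Rightarrow> 'v \<Rightarrow> nat list \<Rightarrow> 'v option" where
  "walk E col v [] = Some v"
| "walk E col v (c # cs) = (case nbr E col v c of Some w \<Rightarrow> walk E col w cs | None \<Rightarrow> None)"

text \<open>The t-hop view of v: for every colour sequence of length at most t the label and input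
 of the node reached (this determines the t-hop neighbourhood with labels and inputs).\<close>
definition view :: "('v \<Rightarrow> 'v \<Rightarrow> bool) \<Rightarrow> ('v \<Rightarrow> 'v \<Rightarrow> nat) \<Rightarrow> ('v \<Rightarrow> nat) \<Rightarrow> nat \<Rightarrow> 'v \<Rightarrow>
                    (nat list \<Rightarrow> (nat \<times> nat set) option)" where
  "view E col h t v = (\<lambda>cs. if length cs \<le> t then map_option (obs E col h) (walk E col v cs) else None)"

type_synonym local_alg = "(nat list \<Rightarrow> (nat \<times> nat set) option) \<Rightarrow> nat set"

end

theory Submission
  imports Defs
begin

text \<open>
  Fix n with f(n) \<le> n/(3\<Delta>) and let H = H(n,\<Delta>). In an arbitrary H-labelled tree, attach to every
  node of degree at most one an infinite ray, coloured with 1 and 2 alternately and labelled along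
  edges of H; the result is an infinite properly coloured and labelled tree of maximum degree \<Delta> in
  which every original node keeps its port-numbered neighbourhood (plus possibly one ray edge).
  Every node simulates the VOLUME algorithm on this extended tree inside its f(n)-hop view, since
  only f(n) probes are made. For adjacent u and w, the nodes probed from u and from w together with
  their neighbours form a connected set of at most 2 (f(n) + 1) \<Delta> \<le> n nodes; growing it to n
  nodes and renaming them by 0, ..., n - 1 gives an n-node tree on which the algorithm is correct and
  runs exactly as in the extended tree. Hence the outputs of u and w agree on the edge uw, and a node
  of degree at least d \<ge> 2 has an outgoing original edge. Thresholds d \<le> 1 are impossible for
  the VOLUME algorithm, as no finite tree with two nodes has such an orientation, and \<Delta> \<le> 1 is
  degenerate.
\<close>

section \<open>Walks, trees and connectivity\<close>

lemma nbr_eq_Some_iff: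
  assumes "proper_edge_col E col \<Delta>"
  shows "nbr E col u c = Some w \<longleftrightarrow> E u w \<and> col u w = c"
proof -
  have "(THE w. E u w \<and> col u w = c) = w" if "E u w" "col u w = c" for w
    using that assms unfolding proper_edge_col_def by (intro the_equality) blast+
  then show ?thesis unfolding nbr_def by auto
qed

lemma nbr_eq_None_iff: "nbr E col u c = None \<longleftrightarrow> c \<notin> colors E col u"
  unfolding nbr_def colors_def by auto

lemma nbr_eqI:
  assumes "proper_edge_col E col \<Delta>" "\<And>w. E u w \<and> col u w = c \<longleftrightarrow> r = Some w"
  shows "nbr E col u c = r"
  using assms nbr_eq_Some_iff[OF assms(1)] by (cases r) (auto, metis not_None_eq)

lemma colors_eq_nbr: "colors E col u = {c. nbr E col u c \<noteq> None}"
  by (auto simp: nbr_eq_None_iff)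

lemma colors_eq_image: "colors E col x = col x ` {w. E x w}"
  unfolding colors_def by auto

lemma card_colors:
  assumes "proper_edge_col E col \<Delta>"
  shows "card (colors E col x) = card {w. E x w}"
proof -
  have "inj_on (col x) {w. E x w}"
    using assms unfolding proper_edge_col_def inj_on_def by blast
  then show ?thesis by (simp add: colors_eq_image card_image)
qed

lemma fst_obs [simp]: "fst (obs E col h x) = h x"
  and snd_obs [simp]: "snd (obs E col h x) = colors E col x"
  unfolding obs_def by auto

lemma walk_path_Nil [simp]: "walk_path E []"
  and walk_path_single [simp]: "walk_path E [x]"
  unfolding walk_path_def by auto

lemma walk_path_Cons_Cons [simp]: "walk_path E (x # y # xs) \<longleftrightarrow> E x y \<and> walk_path E (y # xs)"
  unfolding walk_path_def by (auto simp: nth_Cons split: nat.splits)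

lemma walk_path_append_Cons:
  "walk_path E (xs @ y # ys) \<longleftrightarrow> walk_path E (xs @ [y]) \<and> walk_path E (y # ys)"
  by (induction xs rule: induct_list012) auto

lemma walk_path_rev:
  assumes "\<And>a b. E a b \<Longrightarrow> E b a" and "walk_path E xs"
  shows "walk_path E (rev xs)"
  using assms(2)
proof (induction xs rule: induct_list012)
  case (3 x y zs)
  then show ?case using assms(1) walk_path_append_Cons[of E "rev zs" y "[x]"] by auto
qed auto

lemma walk_path_join:
  assumes "walk_path E xs" "walk_path E ys" "xs \<noteq> []" "ys \<noteq> []" "last xs = hd ys"
  shows "walk_path E (xs @ tl ys)"
proof -
  obtain y ys' where ys: "ys = y # ys'" using assms(4) by (cases ys) auto
  obtain xs' where "xs = xs' @ [y]" using assms(3,5) ys by (metis append_butlast_last_id list.sel(1))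
  then show ?thesis using assms(1,2) walk_path_append_Cons[of E xs' y ys'] ys by simp
qed

lemma walk_path_mono_on:
  "walk_path E xs \<Longrightarrow> (\<And>a b. a \<in> set xs \<Longrightarrow> b \<in> set xs \<Longrightarrow> E a b \<Longrightarrow> E' a b) \<Longrightarrow> walk_path E' xs"
  unfolding walk_path_def by (meson Suc_lessD nth_mem)

lemma walk_path_map: "walk_path E (map f xs) \<longleftrightarrow> walk_path (\<lambda>a b. E (f a) (f b)) xs"
  unfolding walk_path_def by auto

lemma walk_path_subset:
  assumes "walk_path E xs" "\<And>a b. E a b \<Longrightarrow> a \<in> V \<and> b \<in> V" "xs \<noteq> []" "hd xs \<in> V"
  shows "set xs \<subseteq> V"
  using assms by (induction xs rule: induct_list012) auto

lemma walk_path_hd_nbr: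
  assumes "walk_path E xs" "xs \<noteq> []" "last xs \<noteq> hd xs"
  shows "\<exists>y\<in>set xs. E (hd xs) y"
proof -
  obtain x y ys where "xs = x # y # ys"
    using assms(2,3) by (metis last_ConsL list.exhaust_sel)
  then show ?thesis using assms(1) by auto
qed

lemma walk_path_edge_leaving:
  "walk_path E xs \<Longrightarrow> xs \<noteq> [] \<Longrightarrow> hd xs \<in> S \<Longrightarrow> last xs \<notin> S \<Longrightarrow> \<exists>x y. x \<in> S \<and> y \<notin> S \<and> E x y"
proof (induction xs)
  case (Cons a xs)
  then obtain b ys where "xs = b # ys" by (cases xs) auto
  with Cons show ?case by (cases "b \<in> S") auto
qed simp

lemma cycle_two_nbrs:
  assumes sym: "\<And>a b. E a b \<Longrightarrow> E b a" and "distinct xs" "3 \<le> length xs"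
    and "walk_path E xs" "E (last xs) (hd xs)" "x \<in> set xs"
  shows "\<exists>p\<in>set xs. \<exists>s\<in>set xs. p \<noteq> s \<and> E x p \<and> E x s"
proof -
  define L where "L = length xs"
  obtain j where j: "j < L" "xs ! j = x" using assms(6) unfolding L_def by (metis in_set_conv_nth)
  define s where "s = (if Suc j < L then Suc j else 0)"
  define p where "p = (if 0 < j then j - 1 else L - 1)"
  have edge: "E (xs ! i) (xs ! Suc i)" if "Suc i < L" for i
    using assms(4) that unfolding walk_path_def L_def by blast
  have "xs \<noteq> []" using assms(3) by auto
  then have closing: "E (xs ! (L - 1)) (xs ! 0)"
    using assms(5) unfolding L_def by (simp add: last_conv_nth hd_conv_nth)
  have "E x (xs ! s)"
  proof (cases "Suc j < L")
    case False
    then have "j = L - 1" using j by linarith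
    then show ?thesis using closing j False unfolding s_def by simp
  qed (use edge[of j] j in \<open>simp add: s_def\<close>)
  moreover have "E x (xs ! p)"
    using edge[of "j - 1"] closing j sym unfolding p_def by (cases j) auto
  moreover have "s < L" "p < L" "s \<noteq> p" using j assms(3) unfolding s_def p_def L_def by auto
  ultimately show ?thesis
    using assms(2) unfolding L_def by (metis nth_eq_iff_index_eq nth_mem)
qed

lemma
  assumes "is_tree V E"
  shows tree_edge_in: "E u w \<Longrightarrow> u \<in> V \<and> w \<in> V"
    and tree_edge_sym: "E u w \<Longrightarrow> E w u"
    and tree_edge_irrefl: "\<not> E u u"
    and tree_walk: "u \<in> V \<Longrightarrow> w \<in> V \<Longrightarrow> \<exists>xs. xs \<noteq> [] \<and> hd xs = u \<and> last xs = w \<and> walk_path E xs"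
    and tree_no_cycle: "3 \<le> length xs \<Longrightarrow> distinct xs \<Longrightarrow> walk_path E xs \<Longrightarrow> E (last xs) (hd xs) \<Longrightarrow> False"
  using assms unfolding is_tree_def by simp_all

lemma is_tree_singleton: "is_tree {a} (\<lambda>_ _. False)"
  unfolding is_tree_def by (auto intro!: exI[of _ "[a]"])

definition connected_in :: "('v \<Rightarrow> 'v \<Rightarrow> bool) \<Rightarrow> 'v set \<Rightarrow> 'v \<Rightarrow> 'v \<Rightarrow> bool" where
  "connected_in E S u y \<longleftrightarrow> (\<exists>xs. xs \<noteq> [] \<and> hd xs = u \<and> last xs = y \<and> walk_path E xs \<and> set xs \<subseteq> S)"

lemma connected_in_refl: "u \<in> S \<Longrightarrow> connected_in E S u u"
  unfolding connected_in_def by (intro exI[of _ "[u]"]) auto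

lemma connected_in_trans:
  assumes "connected_in E S u x" "connected_in E S x y"
  shows "connected_in E S u y"
proof -
  obtain xs where xs: "xs \<noteq> []" "hd xs = u" "last xs = x" "walk_path E xs" "set xs \<subseteq> S"
    using assms(1) unfolding connected_in_def by blast
  obtain ys where ys: "ys \<noteq> []" "hd ys = x" "last ys = y" "walk_path E ys" "set ys \<subseteq> S"
    using assms(2) unfolding connected_in_def by blast
  have "walk_path E (xs @ tl ys)" using walk_path_join[OF xs(4) ys(4)] xs ys by simp
  moreover have "last (xs @ tl ys) = y" "set (tl ys) \<subseteq> S"
    using xs ys by (cases ys; auto)+
  ultimately show ?thesis
    unfolding connected_in_def using xs by (intro exI[of _ "xs @ tl ys"]) auto
qed

lemma connected_in_mem: "connected_in E S u y \<Longrightarrow> u \<in> S \<and> y \<in> S"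
  unfolding connected_in_def by (metis hd_in_set last_in_set subsetD)

lemma connected_in_step:
  assumes "connected_in E S u x" "E x y" "y \<in> S"
  shows "connected_in E S u y"
proof -
  have "connected_in E S x y"
    using assms connected_in_mem unfolding connected_in_def by (intro exI[of _ "[x, y]"]) auto
  with assms(1) show ?thesis by (rule connected_in_trans)
qed

lemma connected_in_mono: "connected_in E S u y \<Longrightarrow> S \<subseteq> S' \<Longrightarrow> connected_in E S' u y"
  unfolding connected_in_def by blast

lemma connected_in_sym:
  assumes "\<And>a b. E a b \<Longrightarrow> E b a" "connected_in E S u y"
  shows "connected_in E S y u"
proof -
  obtain xs where "xs \<noteq> []" "hd xs = u" "last xs = y" "walk_path E xs" "set xs \<subseteq> S"
    using assms(2) unfolding connected_in_def by blast
  then show ?thesis unfolding connected_in_def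
    using walk_path_rev[OF assms(1)] by (intro exI[of _ "rev xs"]) (auto simp: hd_rev last_rev)
qed

lemma connected_in_walk:
  assumes "\<And>a b. E a b \<Longrightarrow> E b a" "connected_in E S u x" "connected_in E S u y"
  shows "\<exists>zs. zs \<noteq> [] \<and> hd zs = x \<and> last zs = y \<and> walk_path E zs \<and> set zs \<subseteq> S"
  using connected_in_trans[OF connected_in_sym[OF assms(1,2)] assms(3)]
  unfolding connected_in_def .

lemma connected_in_has_nbr:
  assumes "\<And>a b. E a b \<Longrightarrow> E b a" "\<forall>y\<in>S. connected_in E S u y" "x \<in> S" "z \<in> S" "x \<noteq> z"
  shows "\<exists>y\<in>S. E x y"
proof -
  obtain zs where "zs \<noteq> []" "hd zs = x" "last zs = z" "walk_path E zs" "set zs \<subseteq> S"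
    using connected_in_walk[OF assms(1) assms(2)[rule_format, OF assms(3)] assms(2)[rule_format, OF assms(4)]]
    by blast
  then show ?thesis using walk_path_hd_nbr[of E zs] assms(5) by auto
qed

lemma first_repetition:
  fixes x :: "nat \<Rightarrow> 'a"
  assumes "finite V" "\<And>i. x i \<in> V"
  shows "\<exists>i J. i < J \<and> x i = x J \<and> inj_on x {i..<J}"
proof -
  have "\<not> inj_on x {0..card V}"
  proof
    assume "inj_on x {0..card V}"
    then have "card {0..card V} \<le> card V"
      using card_inj_on_le assms by blast
    then show False by simp
  qed
  then have ex: "\<exists>J. \<exists>i<J. x i = x J"
    unfolding inj_on_def by (metis linorder_neqE_nat)
  define J where "J = (LEAST J. \<exists>i<J. x i = x J)"
  obtain i where i: "i < J" "x i = x J"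
    using LeastI_ex[OF ex] unfolding J_def by blast
  have no_earlier: "x a \<noteq> x b" if "a < b" "b < J" for a b
  proof
    assume "x a = x b"
    then have "J \<le> b" unfolding J_def using that(1) by (intro Least_le) blast
    with that(2) show False by simp
  qed
  then have "inj_on x {i..<J}"
    unfolding inj_on_def by (metis atLeastLessThan_iff linorder_neqE_nat)
  with i show ?thesis by blast
qed

lemma finite_tree_no_nonbacktracking_walk:
  assumes tree: "is_tree V E" and "finite V"
    and walk: "\<And>i. E (x i) (x (Suc i))" and nonbacktracking: "\<And>i. x (Suc (Suc i)) \<noteq> x i"
  shows False
proof -
  have "x i \<in> V" for i using tree_edge_in[OF tree walk] by blast
  then obtain i J where iJ: "i < J" "x i = x J" "inj_on x {i..<J}"
    using first_repetition[OF \<open>finite V\<close>] by blast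
  define zs where "zs = map x [i..<J]"
  have "J \<noteq> Suc i" using iJ(2) walk[of i] tree_edge_irrefl[OF tree] by metis
  moreover have "J \<noteq> Suc (Suc i)" using iJ(2) nonbacktracking[of i] by metis
  ultimately have "3 \<le> length zs" using iJ(1) unfolding zs_def by simp
  moreover have "distinct zs" unfolding zs_def using iJ(3) by (simp add: distinct_map)
  moreover have "walk_path E zs" unfolding zs_def walk_path_def using walk by simp
  moreover have "E (last zs) (hd zs)"
    using iJ(1,2) walk[of "J - 1"] unfolding zs_def by (simp add: last_map hd_map)
  ultimately show False using tree_no_cycle[OF tree] by blast
qed

lemma finite_tree_has_leaf:
  assumes tree: "is_tree V E" and "finite V" "u \<in> V"
  shows "\<exists>l\<in>V. \<forall>a b. E l a \<and> E l b \<longrightarrow> a = b"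
proof (rule ccontr)
  define nx where "nx p l = (SOME z. E l z \<and> z \<noteq> p)" for p l
  assume "\<not> ?thesis"
  then have branching: "\<exists>z. E l z \<and> z \<noteq> p" if "l \<in> V" for l p using that by metis
  have nx: "E l (nx p l) \<and> nx p l \<noteq> p" if "l \<in> V" for l p
    unfolding nx_def by (rule someI_ex) (rule branching[OF that])
  obtain u1 where "E u u1" using nx[OF \<open>u \<in> V\<close>] by blast
  define y where "y i = ((\<lambda>pl. (snd pl, nx (fst pl) (snd pl))) ^^ i) (u, u1)" for i
  have y_Suc: "y (Suc i) = (snd (y i), nx (fst (y i)) (snd (y i)))" for i
    unfolding y_def by simp
  have edge: "E (fst (y i)) (snd (y i))" for i
  proof (induction i)
    case (Suc i)
    then show ?case using nx tree_edge_in[OF tree] by (simp add: y_Suc)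
  qed (simp add: y_def \<open>E u u1\<close>)
  show False
  proof (rule finite_tree_no_nonbacktracking_walk[OF tree \<open>finite V\<close>, of "\<lambda>i. fst (y i)"])
    show "E (fst (y i)) (fst (y (Suc i)))" for i using edge by (simp add: y_Suc)
    show "fst (y (Suc (Suc i))) \<noteq> fst (y i)" for i
      using nx tree_edge_in[OF tree edge] by (simp add: y_Suc)
  qed
qed

text \<open>Following out-edges of a sinkless orientation never backtracks, which no finite tree allows.\<close>

lemma finite_tree_no_sinkless_orientation:
  assumes tree: "is_tree V E" "finite V" and ab: "a \<in> V" "b \<in> V" "a \<noteq> b"
    and pc: "proper_edge_col E col \<Delta>" and "d \<le> 1"
  shows "\<not> sinkless_orientation d V E col S"
proof
  assume so: "sinkless_orientation d V E col S"
  have "\<exists>y. E v y \<and> col v y \<in> S v" if v: "v \<in> V" for v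
  proof -
    obtain z where "z \<in> V" "z \<noteq> v" using ab by metis
    then obtain y where "E v y"
      using tree_walk[OF tree(1) v] walk_path_hd_nbr by metis
    have "finite {w. E v w}" using tree_edge_in[OF tree(1)] tree(2) by (metis finite_subset mem_Collect_eq subsetI)
    then have "0 < card {w. E v w}" using \<open>E v y\<close> card_gt_0_iff by blast
    then have "d \<le> card {w. E v w}" using \<open>d \<le> 1\<close> by linarith
    then obtain c where "c \<in> S v" "c \<in> colors E col v"
      using so v unfolding sinkless_orientation_def by blast
    then show ?thesis unfolding colors_def by blast
  qed
  then obtain out where out: "\<And>v. v \<in> V \<Longrightarrow> E v (out v) \<and> col v (out v) \<in> S v" by metis
  define x where "x i = (out ^^ i) a" for i
  have x_in: "x i \<in> V" for i
    by (induction i) (use ab out tree_edge_in[OF tree(1)] in \<open>auto simp: x_def\<close>)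
  have x_Suc: "x (Suc i) = out (x i)" for i unfolding x_def by simp
  show False
  proof (rule finite_tree_no_nonbacktracking_walk[OF tree, of x])
    show "E (x i) (x (Suc i))" for i using out x_in by (simp add: x_Suc)
    show "x (Suc (Suc i)) \<noteq> x i" for i
    proof
      assume return: "x (Suc (Suc i)) = x i"
      have "E (x i) (x (Suc i))" "col (x i) (x (Suc i)) \<in> S (x i)"
        "col (x (Suc i)) (x i) \<in> S (x (Suc i))"
        using out[OF x_in[of i]] out[OF x_in[of "Suc i"]] return by (simp_all add: x_Suc)
      then show False using so pc unfolding sinkless_orientation_def proper_edge_col_def by metis
    qed
  qed
qed

section \<open>Finite pieces of infinite trees\<close>

lemma infinite_tree_edge_leaving:
  assumes tree: "is_tree V E" and "infinite V" "finite S" "S \<subseteq> V" "u \<in> S"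
  shows "\<exists>x\<in>S. \<exists>y. y \<in> V - S \<and> E x y"
proof -
  obtain z where z: "z \<in> V" "z \<notin> S" using assms(2-4) by (metis finite_subset subsetI)
  then obtain xs where "xs \<noteq> []" "hd xs = u" "last xs = z" "walk_path E xs"
    using tree_walk[OF tree] assms(4,5) by blast
  then obtain x y where "x \<in> S" "y \<notin> S" "E x y"
    using walk_path_edge_leaving[of E xs S] assms(5) z(2) by auto
  then show ?thesis using tree_edge_in[OF tree] by blast
qed

lemma infinite_tree_connected_superset:
  assumes tree: "is_tree V E" and "infinite V"
    and S0: "finite S0" "S0 \<subseteq> V" "u \<in> S0" "\<forall>y\<in>S0. connected_in E S0 u y" and "card S0 \<le> m"
  shows "\<exists>S. S0 \<subseteq> S \<and> S \<subseteq> V \<and> finite S \<and> card S = m \<and> (\<forall>y\<in>S. connected_in E S u y)"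
proof -
  obtain k where "m = card S0 + k" using le_Suc_ex[OF \<open>card S0 \<le> m\<close>] by blast
  then show ?thesis using S0
  proof (induction k arbitrary: S0)
    case 0
    then show ?case by (intro exI[of _ S0]) simp
  next
    case (Suc k)
    obtain x y where xy: "x \<in> S0" "y \<in> V - S0" "E x y"
      using infinite_tree_edge_leaving[OF tree \<open>infinite V\<close> Suc.prems(2-4)] by blast
    let ?S1 = "insert y S0"
    have "connected_in E ?S1 u z" if "z \<in> S0" for z
      using connected_in_mono[OF Suc.prems(5)[rule_format, OF that] subset_insertI] .
    then have conn: "\<forall>z\<in>?S1. connected_in E ?S1 u z"
      using connected_in_step[of E ?S1 u x y] xy by blast
    have card: "m = card ?S1 + k" using Suc.prems(1,2) xy(2) by simp
    have "finite ?S1" "?S1 \<subseteq> V" "u \<in> ?S1" using Suc.prems(2-4) xy(2) by auto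
    from Suc.IH[OF card this conn] show ?case by blast
  qed
qed

lemma card_closed_nbhd_le:
  assumes "finite D" "max_deg_le D E \<Delta>" "\<forall>x\<in>D. \<exists>z\<in>D. E x z"
  shows "finite (D \<union> {y. \<exists>x\<in>D. E x y})" "card (D \<union> {y. \<exists>x\<in>D. E x y}) \<le> card D * \<Delta>"
proof -
  obtain p where p: "\<And>x. x \<in> D \<Longrightarrow> p x \<in> D \<and> E x (p x)" using assms(3) by metis
  have fin: "\<And>x. x \<in> D \<Longrightarrow> finite {y. E x y} \<and> card {y. E x y} \<le> \<Delta>"
    using assms(2) unfolding max_deg_le_def by blast
  let ?N = "\<Union>x\<in>D. {y. E x y} - {p x}"
  have sub: "D \<union> {y. \<exists>x\<in>D. E x y} \<subseteq> D \<union> ?N" using p by blast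
  have finN: "finite (D \<union> ?N)" using assms(1) fin by auto
  then show "finite (D \<union> {y. \<exists>x\<in>D. E x y})" using sub finite_subset by blast
  have "card ({y. E x y} - {p x}) = card {y. E x y} - 1" if "x \<in> D" for x
    using p[OF that] fin[OF that] by (simp add: card_Diff_singleton)
  then have "card ({y. E x y} - {p x}) + 1 \<le> \<Delta>" if "x \<in> D" for x
    using p[OF that] fin[OF that] card_gt_0_iff[of "{y. E x y}"] that by fastforce
  then have "(\<Sum>x\<in>D. card ({y. E x y} - {p x}) + 1) \<le> card D * \<Delta>"
    using sum_mono[of D "\<lambda>x. card ({y. E x y} - {p x}) + 1" "\<lambda>_. \<Delta>"] by simp
  moreover have "card (D \<union> ?N) \<le> card D + (\<Sum>x\<in>D. card ({y. E x y} - {p x}))"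
    using card_Un_le[of D ?N] card_UN_le[OF assms(1), of "\<lambda>x. {y. E x y} - {p x}"] by linarith
  moreover have "(\<Sum>x\<in>D. card ({y. E x y} - {p x}) + 1) = (\<Sum>x\<in>D. card ({y. E x y} - {p x})) + card D"
    by (simp only: sum.distrib) simp
  ultimately show "card (D \<union> {y. \<exists>x\<in>D. E x y}) \<le> card D * \<Delta>"
    using card_mono[OF finN sub] by linarith
qed

definition local_embedding_on ::
  "'a set \<Rightarrow> ('a \<Rightarrow> 'b) \<Rightarrow> ('a \<Rightarrow> 'a \<Rightarrow> bool) \<Rightarrow> ('a \<Rightarrow> 'a \<Rightarrow> nat) \<Rightarrow> ('a \<Rightarrow> nat) \<Rightarrow>
   ('b \<Rightarrow> 'b \<Rightarrow> bool) \<Rightarrow> ('b \<Rightarrow> 'b \<Rightarrow> nat) \<Rightarrow> ('b \<Rightarrow> nat) \<Rightarrow> bool" where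
  "local_embedding_on D \<sigma> E col h E' col' h' \<longleftrightarrow>
     (\<forall>x\<in>D. h' (\<sigma> x) = h x \<and> (\<forall>c. nbr E' col' (\<sigma> x) c = map_option \<sigma> (nbr E col x c)))"

lemma local_embedding_on_obs:
  assumes "local_embedding_on D \<sigma> E col h E' col' h'" "x \<in> D"
  shows "obs E' col' h' (\<sigma> x) = obs E col h x"
proof -
  have "nbr E' col' (\<sigma> x) c = None \<longleftrightarrow> nbr E col x c = None" for c
    using assms unfolding local_embedding_on_def by simp
  then have "colors E' col' (\<sigma> x) = colors E col x"
    unfolding nbr_eq_None_iff by blast
  with assms show ?thesis unfolding local_embedding_on_def obs_def by simp
qed

lemma local_embedding_on_edge:
  assumes "local_embedding_on D \<sigma> E col h E' col' h'" "x \<in> D" "E x y"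
    and "proper_edge_col E col \<Delta>" "proper_edge_col E' col' \<Delta>"
  shows "E' (\<sigma> x) (\<sigma> y) \<and> col' (\<sigma> x) (\<sigma> y) = col x y"
proof -
  have "nbr E col x (col x y) = Some y" using assms(3,4) by (simp add: nbr_eq_Some_iff)
  then have "nbr E' col' (\<sigma> x) (col x y) = Some (\<sigma> y)"
    using assms(1,2) unfolding local_embedding_on_def by simp
  then show ?thesis unfolding nbr_eq_Some_iff[OF assms(5)] .
qed

definition copy_E :: "(nat \<Rightarrow> 'v) \<Rightarrow> nat \<Rightarrow> ('v \<Rightarrow> 'v \<Rightarrow> bool) \<Rightarrow> nat \<Rightarrow> nat \<Rightarrow> bool" where
  "copy_E \<tau> m E a b \<longleftrightarrow> a < m \<and> b < m \<and> E (\<tau> a) (\<tau> b)"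

context
  fixes \<tau> :: "nat \<Rightarrow> 'v" and m :: nat and S :: "'v set"
  assumes bij: "bij_betw \<tau> {0..<m} S"
begin

lemma copy_inv_into:
  shows "x \<in> S \<Longrightarrow> inv_into {0..<m} \<tau> x < m \<and> \<tau> (inv_into {0..<m} \<tau> x) = x"
    and "a < m \<Longrightarrow> \<tau> a \<in> S \<and> inv_into {0..<m} \<tau> (\<tau> a) = a"
   apply (metis atLeastLessThan_iff bij bij_betw_imp_surj_on bij_betw_inv_into_right inv_into_into)
  by (metis atLeastLessThan_iff bij bij_betwE bij_betw_inv_into_left zero_le)

lemma is_tree_copy:
  assumes tree: "is_tree V E" and "S \<subseteq> V" and conn: "\<forall>y\<in>S. connected_in E S u y"
  shows "is_tree {0..<m} (copy_E \<tau> m E)"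
  unfolding is_tree_def
proof (intro conjI)
  show "\<forall>a b. copy_E \<tau> m E a b \<longrightarrow> copy_E \<tau> m E b a" "\<forall>a. \<not> copy_E \<tau> m E a a"
    using tree_edge_sym[OF tree] tree_edge_irrefl[OF tree] unfolding copy_E_def by blast+
  show "\<forall>a\<in>{0..<m}. \<forall>b\<in>{0..<m}. \<exists>xs. xs \<noteq> [] \<and> hd xs = a \<and> last xs = b \<and> walk_path (copy_E \<tau> m E) xs"
  proof (intro ballI)
    fix a b assume "a \<in> {0..<m}" "b \<in> {0..<m}"
    then have ab: "\<tau> a \<in> S" "\<tau> b \<in> S" "inv_into {0..<m} \<tau> (\<tau> a) = a" "inv_into {0..<m} \<tau> (\<tau> b) = b"
      using copy_inv_into(2) by auto
    obtain zs where zs: "zs \<noteq> []" "hd zs = \<tau> a" "last zs = \<tau> b" "walk_path E zs" "set zs \<subseteq> S"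
      using connected_in_walk[OF tree_edge_sym[OF tree] conn[rule_format, OF ab(1)] conn[rule_format, OF ab(2)]]
      by blast
    have "walk_path (copy_E \<tau> m E) (map (inv_into {0..<m} \<tau>) zs)"
      unfolding walk_path_map copy_E_def
      by (rule walk_path_mono_on[OF zs(4)]) (use zs(5) copy_inv_into(1) in \<open>simp add: subset_iff\<close>)
    then show "\<exists>xs. xs \<noteq> [] \<and> hd xs = a \<and> last xs = b \<and> walk_path (copy_E \<tau> m E) xs"
      using zs ab by (intro exI[of _ "map (inv_into {0..<m} \<tau>) zs"]) (simp add: hd_map last_map)
  qed
  show "\<nexists>xs. 3 \<le> length xs \<and> distinct xs \<and> walk_path (copy_E \<tau> m E) xs \<and> copy_E \<tau> m E (last xs) (hd xs)"
  proof
    assume "\<exists>xs. 3 \<le> length xs \<and> distinct xs \<and> walk_path (copy_E \<tau> m E) xs \<and> copy_E \<tau> m E (last xs) (hd xs)"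
    then obtain ys where ys: "3 \<le> length ys" "distinct ys" "walk_path (copy_E \<tau> m E) ys"
      "copy_E \<tau> m E (last ys) (hd ys)" by blast
    have "set ys \<subseteq> {0..<m}"
      by (rule walk_path_subset[OF ys(3)]) (use ys in \<open>auto simp: copy_E_def\<close>)
    then have "inj_on \<tau> (set ys)" using bij inj_on_subset unfolding bij_betw_def by blast
    moreover have "walk_path E (map \<tau> ys)"
      unfolding walk_path_map by (rule walk_path_mono_on[OF ys(3)]) (simp add: copy_E_def)
    moreover have "ys \<noteq> []" using ys(1) by auto
    ultimately show False
      using tree_no_cycle[OF tree, of "map \<tau> ys"] ys by (auto simp: distinct_map hd_map last_map copy_E_def)
  qed
qed (auto simp: copy_E_def)

lemma max_deg_le_copy:
  assumes deg: "max_deg_le V E \<Delta>" and "S \<subseteq> V"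
  shows "max_deg_le {0..<m} (copy_E \<tau> m E) \<Delta>"
  unfolding max_deg_le_def
proof
  fix a assume "a \<in> {0..<m}"
  then have fin: "finite {y. E (\<tau> a) y}" "card {y. E (\<tau> a) y} \<le> \<Delta>"
    using deg copy_inv_into(2) \<open>S \<subseteq> V\<close> unfolding max_deg_le_def by auto
  have "inj_on \<tau> {b. copy_E \<tau> m E a b}"
    using bij unfolding bij_betw_def copy_E_def by (auto intro: inj_on_subset)
  moreover have "\<tau> ` {b. copy_E \<tau> m E a b} \<subseteq> {y. E (\<tau> a) y}" unfolding copy_E_def by auto
  moreover have "finite {b. copy_E \<tau> m E a b}" unfolding copy_E_def by simp
  ultimately show "finite {b. copy_E \<tau> m E a b} \<and> card {b. copy_E \<tau> m E a b} \<le> \<Delta>"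
    using card_inj_on_le[OF _ _ fin(1)] fin(2) by fastforce
qed

lemma proper_edge_col_copy:
  assumes "proper_edge_col E col \<Delta>"
  shows "proper_edge_col (copy_E \<tau> m E) (\<lambda>a b. col (\<tau> a) (\<tau> b)) \<Delta>"
  using assms copy_inv_into(2) unfolding proper_edge_col_def copy_E_def by metis

lemma proper_H_labeling_copy:
  assumes "proper_H_labeling H R \<Delta> V E col h" "S \<subseteq> V"
  shows "proper_H_labeling H R \<Delta> {0..<m} (copy_E \<tau> m E) (\<lambda>a b. col (\<tau> a) (\<tau> b)) (h \<circ> \<tau>)"
  using assms copy_inv_into(2) unfolding proper_H_labeling_def copy_E_def by (auto simp: subset_iff)

lemma local_embedding_copy:
  assumes pc: "proper_edge_col E col \<Delta>"
  shows "local_embedding_on {x \<in> S. \<forall>y. E x y \<longrightarrow> y \<in> S} (inv_into {0..<m} \<tau>)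
           E col h (copy_E \<tau> m E) (\<lambda>a b. col (\<tau> a) (\<tau> b)) (h \<circ> \<tau>)"
  unfolding local_embedding_on_def
proof (intro ballI conjI allI)
  let ?\<sigma> = "inv_into {0..<m} \<tau>"
  fix x assume "x \<in> {x \<in> S. \<forall>y. E x y \<longrightarrow> y \<in> S}"
  then have x: "x \<in> S" "\<And>y. E x y \<Longrightarrow> y \<in> S" by auto
  show "(h \<circ> \<tau>) (?\<sigma> x) = h x" using copy_inv_into(1)[OF x(1)] by simp
  fix c
  have "nbr (copy_E \<tau> m E) (\<lambda>a b. col (\<tau> a) (\<tau> b)) (?\<sigma> x) c = Some b \<longleftrightarrow>
        map_option ?\<sigma> (nbr E col x c) = Some b" for b
  proof -
    have "copy_E \<tau> m E (?\<sigma> x) b \<and> col x (\<tau> b) = c \<longleftrightarrow> (\<exists>y. E x y \<and> col x y = c \<and> ?\<sigma> y = b)"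
      using x copy_inv_into unfolding copy_E_def by metis
    then show ?thesis
      using copy_inv_into(1)[OF x(1)]
      by (simp add: nbr_eq_Some_iff[OF proper_edge_col_copy[OF pc]] nbr_eq_Some_iff[OF pc])
  qed
  then show "nbr (copy_E \<tau> m E) (\<lambda>a b. col (\<tau> a) (\<tau> b)) (?\<sigma> x) c = map_option ?\<sigma> (nbr E col x c)"
    by (metis not_None_eq)
qed

end

lemma finite_part_in_nat_tree:
  assumes tree: "is_tree V E" "infinite V" and deg: "max_deg_le V E \<Delta>"
    and pc: "proper_edge_col E col \<Delta>" and lab: "proper_H_labeling H R \<Delta> V E col h"
    and D: "finite D" "D \<subseteq> V" "u \<in> D" "\<forall>y\<in>D. connected_in E D u y" "\<forall>x\<in>D. \<exists>z\<in>D. E x z"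
    and n: "card D * \<Delta> \<le> n"
  shows "\<exists>(\<sigma> :: 'v \<Rightarrow> nat) V' E' col' h'. finite V' \<and> card V' = n \<and> is_tree V' E' \<and>
           max_deg_le V' E' \<Delta> \<and> proper_edge_col E' col' \<Delta> \<and> proper_H_labeling H R \<Delta> V' E' col' h' \<and>
           local_embedding_on D \<sigma> E col h E' col' h'"
proof -
  define S0 where "S0 = D \<union> {y. \<exists>x\<in>D. E x y}"
  have "max_deg_le D E \<Delta>" using deg D(2) unfolding max_deg_le_def by blast
  then have S0: "finite S0" "card S0 \<le> n"
    using card_closed_nbhd_le[OF D(1) _ D(5)] n unfolding S0_def by (blast, fastforce)
  have "S0 \<subseteq> V" using D(2) tree_edge_in[OF tree(1)] unfolding S0_def by blast
  moreover have "\<forall>y\<in>S0. connected_in E S0 u y"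
  proof
    fix y assume "y \<in> S0"
    have D_conn: "connected_in E S0 u x" if "x \<in> D" for x
      using connected_in_mono[OF D(4)[rule_format, OF that]] unfolding S0_def by blast
    show "connected_in E S0 u y"
    proof (cases "y \<in> D")
      case False
      then obtain x where "x \<in> D" "E x y" using \<open>y \<in> S0\<close> unfolding S0_def by blast
      then show ?thesis using connected_in_step[OF D_conn] \<open>y \<in> S0\<close> by blast
    qed (rule D_conn)
  qed
  ultimately obtain S where S: "S0 \<subseteq> S" "S \<subseteq> V" "finite S" "card S = n" "\<forall>y\<in>S. connected_in E S u y"
    using infinite_tree_connected_superset[OF tree S0(1) _ _ _ S0(2)] D(3) unfolding S0_def by blast
  obtain \<tau> where \<tau>: "bij_betw \<tau> {0..<n} S" using ex_bij_betw_nat_finite[OF S(3)] S(4) by blast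
  have "D \<subseteq> {x \<in> S. \<forall>y. E x y \<longrightarrow> y \<in> S}" using S(1) unfolding S0_def by blast
  then have "local_embedding_on D (inv_into {0..<n} \<tau>) E col h
               (copy_E \<tau> n E) (\<lambda>a b. col (\<tau> a) (\<tau> b)) (h \<circ> \<tau>)"
    using local_embedding_copy[OF \<tau> pc] unfolding local_embedding_on_def by blast
  then show ?thesis
    using is_tree_copy[OF \<tau> tree(1) S(2,5)] max_deg_le_copy[OF \<tau> deg S(2)]
      proper_edge_col_copy[OF \<tau> pc] proper_H_labeling_copy[OF \<tau> lab S(2)]
    by (intro exI[of _ "inv_into {0..<n} \<tau>"] exI[of _ "{0..<n}"]) auto
qed

section \<open>VOLUME executions on local copies\<close>

fun vtrace :: "volume_alg \<Rightarrow> nat \<Rightarrow> ('v \<Rightarrow> 'v \<Rightarrow> bool) \<Rightarrow> ('v \<Rightarrow> 'v \<Rightarrow> nat) \<Rightarrow> ('v \<Rightarrow> nat) \<Rightarrow>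
               nat \<Rightarrow> 'v list \<Rightarrow> 'v list" where
  "vtrace A n E col h 0 us = us"
| "vtrace A n E col h (Suc k) us =
     (case A n (map (obs E col h) us) of
        VOutput S \<Rightarrow> us
      | VProbe i c \<Rightarrow>
          (if i < length us then
             (case nbr E col (us ! i) c of
                Some w \<Rightarrow> vtrace A n E col h k (us @ [w])
              | None \<Rightarrow> us)
           else us))"

lemma set_subset_vtrace: "set us \<subseteq> set (vtrace A n E col h k us)"
proof (induction k arbitrary: us)
  case (Suc k)
  then show ?case by (fastforce split: vaction.split option.split)
qed simp

lemma length_vtrace_le: "length (vtrace A n E col h k us) \<le> length us + k"
proof (induction k arbitrary: us)
  case (Suc k)
  have "length (vtrace A n E col h k (us @ [w])) \<le> length us + Suc k" for w
    using Suc.IH[of "us @ [w]"] by simp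
  then show ?case by (auto split: vaction.split option.split)
qed simp

lemma vtrace_induct:
  assumes pc: "proper_edge_col E col \<Delta>" and init: "\<forall>x\<in>set us. P x"
    and step: "\<And>x w. P x \<Longrightarrow> E x w \<Longrightarrow> w \<in> set (vtrace A n E col h k us) \<Longrightarrow> P w"
  shows "\<forall>y\<in>set (vtrace A n E col h k us). P y"
  using init step
proof (induction k arbitrary: us)
  case (Suc k)
  show ?case
  proof (cases "\<exists>i c w. A n (map (obs E col h) us) = VProbe i c \<and> i < length us \<and>
                         nbr E col (us ! i) c = Some w")
    case True
    then obtain i c w where probe: "A n (map (obs E col h) us) = VProbe i c" "i < length us"
      "nbr E col (us ! i) c = Some w" by blast
    then have trace: "vtrace A n E col h (Suc k) us = vtrace A n E col h k (us @ [w])" by simp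
    have "w \<in> set (vtrace A n E col h k (us @ [w]))" using set_subset_vtrace by fastforce
    then have "P w"
      using Suc.prems probe nbr_eq_Some_iff[OF pc] trace by (metis nth_mem)
    then have "\<forall>x\<in>set (us @ [w]). P x" using Suc.prems(1) by simp
    from Suc.IH[OF this Suc.prems(2)[unfolded trace]] show ?thesis unfolding trace .
  next
    case False
    then have "vtrace A n E col h (Suc k) us = us"
      by (cases "A n (map (obs E col h) us)") (auto split: option.split)
    then show ?thesis using Suc.prems by simp
  qed
qed simp

lemma vtrace_connected_in:
  assumes pc: "proper_edge_col E col \<Delta>" and "set (vtrace A n E col h k [x]) \<subseteq> S"
  shows "\<forall>y\<in>set (vtrace A n E col h k [x]). connected_in E S x y"
proof (rule vtrace_induct[OF pc])
  have "x \<in> S" using assms(2) set_subset_vtrace[of "[x]"] by auto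
  then show "\<forall>y\<in>set [x]. connected_in E S x y" by (simp add: connected_in_refl)
qed (meson assms(2) connected_in_step subsetD)

lemma vexec_transfer:
  assumes "local_embedding_on (set (vtrace A n E col h k us)) \<sigma> E col h E' col' h'"
  shows "vexec A n E' col' h' k (map \<sigma> us) = vexec A n E col h k us"
  using assms
proof (induction k arbitrary: us)
  case 0
  have "map (obs E' col' h') (map \<sigma> us) = map (obs E col h) us"
    using local_embedding_on_obs[OF 0] by simp
  then show ?case by (simp only: vexec.simps)
next
  case (Suc k)
  have sub: "set us \<subseteq> set (vtrace A n E col h (Suc k) us)" by (rule set_subset_vtrace)
  have "obs E' col' h' (\<sigma> x) = obs E col h x" if "x \<in> set us" for x
    using local_embedding_on_obs[OF Suc.prems subsetD[OF sub that]] .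
  then have obs: "map (obs E' col' h') (map \<sigma> us) = map (obs E col h) us" by simp
  show ?case
  proof (cases "\<exists>i c. A n (map (obs E col h) us) = VProbe i c \<and> i < length us")
    case True
    then obtain i c where probe: "A n (map (obs E col h) us) = VProbe i c" "i < length us" by blast
    have "us ! i \<in> set (vtrace A n E col h (Suc k) us)" using probe(2) sub by auto
    from bspec[OF Suc.prems[unfolded local_embedding_on_def] this]
    have nbr: "nbr E' col' (\<sigma> (us ! i)) c = map_option \<sigma> (nbr E col (us ! i) c)" by simp
    show ?thesis
    proof (cases "nbr E col (us ! i) c")
      case (Some w)
      then have "vtrace A n E col h (Suc k) us = vtrace A n E col h k (us @ [w])" using probe by simp
      from Suc.IH[OF Suc.prems[unfolded this]]
      have "vexec A n E' col' h' k (map \<sigma> (us @ [w])) = vexec A n E col h k (us @ [w])" .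
      then show ?thesis using probe Some nbr obs by (simp del: map_map)
    qed (use probe nbr obs in \<open>simp del: map_map\<close>)
  qed (use obs in \<open>auto split: vaction.split simp del: map_map\<close>)
qed

section \<open>ID graphs\<close>

lemma
  assumes "is_ID_graph R \<Delta> H"
  shows ID_graph_support: "H i u v \<Longrightarrow> i \<in> {1..\<Delta>} \<and> u < idg_size R \<Delta> \<and> v < idg_size R \<Delta>"
    and ID_graph_sym: "H i u v \<Longrightarrow> H i v u"
    and ID_graph_irrefl: "\<not> H i u u"
    and ID_graph_has_nbr: "i \<in> {1..\<Delta>} \<Longrightarrow> v < idg_size R \<Delta> \<Longrightarrow> \<exists>u. H i v u"
proof -
  note ID = assms[unfolded is_ID_graph_def Let_def]
  show "H i u v \<Longrightarrow> i \<in> {1..\<Delta>} \<and> u < idg_size R \<Delta> \<and> v < idg_size R \<Delta>"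
    using ID[THEN conjunct1] by blast
  show "H i u v \<Longrightarrow> H i v u" using ID[THEN conjunct2, THEN conjunct1] by blast
  show "\<not> H i u u" using ID[THEN conjunct2, THEN conjunct2, THEN conjunct1] by blast
  assume "i \<in> {1..\<Delta>}" "v < idg_size R \<Delta>"
  then have "1 \<le> card {u. H i v u}"
    using ID[THEN conjunct2, THEN conjunct2, THEN conjunct2, THEN conjunct1] by blast
  then show "\<exists>u. H i v u" by (metis Collect_empty_eq card.empty not_one_le_zero)
qed

lemma no_ID_graph_Delta1: "\<not> is_ID_graph R 1 H"
proof
  assume ID: "is_ID_graph R 1 H"
  have size: "idg_size R 1 = 1" by (simp add: idg_size_def)
  then obtain u where u: "H 1 0 u" using ID_graph_has_nbr[OF ID, of 1 0] by auto
  then have "u = 0" using ID_graph_support[OF ID u] size by simp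
  then show False using u ID_graph_irrefl[OF ID] by blast
qed

lemma concat_map_eq_blocks:
  assumes "\<And>x. x \<in> set xs \<Longrightarrow> length (f x) = length (g x)" "concat (map f xs) = concat (map g xs)"
  shows "\<forall>x\<in>set xs. f x = g x"
  using assms
proof (induction xs)
  case (Cons a xs)
  then have "f a = g a" "concat (map f xs) = concat (map g xs)"
    using append_eq_append_conv[of "f a" "g a"] by auto
  with Cons show ?case by simp
qed simp

lemma idg_encode_blocks:
  "idg_encode R \<Delta> H = concat (map (\<lambda>i. concat (map (\<lambda>u. map (H i u) [0..<idg_size R \<Delta>])
                         [0..<idg_size R \<Delta>])) [1..<\<Delta> + 1])"
  unfolding idg_encode_def by (simp del: upt_Suc add: map_concat)

lemma idg_encode_inj:
  assumes "is_ID_graph R \<Delta> H" "is_ID_graph R \<Delta> H'" "idg_encode R \<Delta> H = idg_encode R \<Delta> H'"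
  shows "H = H'"
proof (intro ext)
  fix i u v
  let ?N = "idg_size R \<Delta>"
  show "H i u v = H' i u v"
  proof (cases "i \<in> {1..\<Delta>} \<and> u < ?N \<and> v < ?N")
    case True
    have "\<forall>i\<in>set [1..<\<Delta> + 1]. concat (map (\<lambda>u. map (H i u) [0..<?N]) [0..<?N]) =
                               concat (map (\<lambda>u. map (H' i u) [0..<?N]) [0..<?N])"
      by (rule concat_map_eq_blocks)
        (use assms(3) in \<open>simp_all add: idg_encode_blocks length_concat o_def del: upt_Suc\<close>)
    then have "\<forall>u\<in>set [0..<?N]. map (H i u) [0..<?N] = map (H' i u) [0..<?N]"
      using True by (intro concat_map_eq_blocks) (auto simp del: upt_Suc)
    then show ?thesis using True by auto
  next
    case False
    then show ?thesis using ID_graph_support[OF assms(1)] ID_graph_support[OF assms(2)] by blast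
  qed
qed

lemma finite_has_lexordp_eq_least:
  fixes F :: "'a :: linorder list set"
  assumes "finite F" "F \<noteq> {}"
  shows "\<exists>m\<in>F. \<forall>x\<in>F. lexordp_eq m x"
  using assms
proof (induction F rule: finite_ne_induct)
  case (insert x F)
  then obtain m where m: "m \<in> F" "\<forall>y\<in>F. lexordp_eq m y" by blast
  show ?case
  proof (cases "lexordp_eq x m")
    case True
    then show ?thesis using m lexordp_eq_trans lexordp_eq_refl by blast
  qed (use m lexordp_eq_linear in blast)
qed (auto simp: lexordp_eq_refl)

lemma Hid_is_ID_graph:
  assumes "\<exists>H. is_ID_graph R \<Delta> H"
  shows "is_ID_graph R \<Delta> (Hid R \<Delta>)"
proof -
  define F where "F = idg_encode R \<Delta> ` {H. is_ID_graph R \<Delta> H}"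
  define L where "L = length (idg_encode R \<Delta> (\<lambda>_ _ _. False))"
  have "length (idg_encode R \<Delta> H) = L" for H
    unfolding L_def by (simp add: idg_encode_blocks length_concat o_def del: upt_Suc)
  then have "F \<subseteq> {xs. set xs \<subseteq> UNIV \<and> length xs = L}" unfolding F_def by auto
  then have "finite F" using finite_lists_length_eq[of "UNIV :: bool set" L] finite_subset by auto
  moreover have "F \<noteq> {}" unfolding F_def using assms by auto
  ultimately obtain m where m: "m \<in> F" "\<forall>x\<in>F. lexordp_eq m x"
    using finite_has_lexordp_eq_least by blast
  then obtain H0 where H0: "is_ID_graph R \<Delta> H0"
    "\<forall>H. is_ID_graph R \<Delta> H \<longrightarrow> lexordp_eq (idg_encode R \<Delta> H0) (idg_encode R \<Delta> H)"
    unfolding F_def by blast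
  have "Hid R \<Delta> = H0"
    unfolding Hid_def
  proof (rule the_equality)
    fix H1 assume "is_ID_graph R \<Delta> H1 \<and>
      (\<forall>H. is_ID_graph R \<Delta> H \<longrightarrow> lexordp_eq (idg_encode R \<Delta> H1) (idg_encode R \<Delta> H))"
    then show "H1 = H0" using H0 idg_encode_inj lexordp_eq_antisym by blast
  qed (use H0 in blast)
  with H0 show ?thesis by simp
qed

section \<open>Extending trees by rays\<close>

definition leafy :: "('v \<Rightarrow> 'v \<Rightarrow> bool) \<Rightarrow> ('v \<Rightarrow> 'v \<Rightarrow> nat) \<Rightarrow> 'v \<Rightarrow> bool" where
  "leafy E col x \<longleftrightarrow> card (colors E col x) \<le> 1"

text \<open>Colour of the k-th edge of the ray attached to a node with incident colours cs, edge 0 joining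
  the node to the ray: 1 and 2 alternate, starting with a colour that is free at a node of degree at
  most one.\<close>

definition ray_col :: "nat set \<Rightarrow> nat \<Rightarrow> nat" where
  "ray_col cs k = (if even k \<longleftrightarrow> 1 \<notin> cs then 1 else 2)"

lemma ray_col_Suc_neq: "ray_col cs (Suc k) \<noteq> ray_col cs k"
  unfolding ray_col_def by simp

lemma ray_col_pair: "{ray_col cs k, ray_col cs (Suc k)} = {1, 2}"
  unfolding ray_col_def by (simp add: insert_commute)

lemma ray_col_range: "2 \<le> \<Delta> \<Longrightarrow> ray_col cs k \<in> {1..\<Delta>}"
  unfolding ray_col_def by simp

lemma ray_col_0_notin:
  assumes "finite cs" "card cs \<le> 1"
  shows "ray_col cs 0 \<notin> cs"
proof (cases "1 \<in> cs")
  case True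
  then have "2 \<notin> cs" using assms card_le_Suc0_iff_eq[of cs] by fastforce
  with True show ?thesis unfolding ray_col_def by simp
qed (simp add: ray_col_def)

definition some_H_nbr :: "(nat \<Rightarrow> nat \<Rightarrow> nat \<Rightarrow> bool) \<Rightarrow> nat \<Rightarrow> nat \<Rightarrow> nat" where
  "some_H_nbr H c x = (SOME y. H c x y)"

lemma some_H_nbr:
  assumes "is_ID_graph R \<Delta> H" "c \<in> {1..\<Delta>}" "x < idg_size R \<Delta>"
  shows "H c x (some_H_nbr H c x) \<and> some_H_nbr H c x < idg_size R \<Delta>"
proof -
  have "H c x (some_H_nbr H c x)"
    unfolding some_H_nbr_def using ID_graph_has_nbr[OF assms] by (rule someI_ex)
  then show ?thesis using ID_graph_support[OF assms(1)] by blast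
qed

fun ray_label :: "(nat \<Rightarrow> nat \<Rightarrow> nat \<Rightarrow> bool) \<Rightarrow> nat \<times> nat set \<Rightarrow> nat \<Rightarrow> nat" where
  "ray_label H ob 0 = some_H_nbr H (ray_col (snd ob) 0) (fst ob)"
| "ray_label H ob (Suc k) = some_H_nbr H (ray_col (snd ob) (Suc k)) (ray_label H ob k)"

lemma ray_label:
  assumes "is_ID_graph R \<Delta> H" "2 \<le> \<Delta>" "fst ob < idg_size R \<Delta>"
  shows "ray_label H ob k < idg_size R \<Delta>"
    and "H (ray_col (snd ob) 0) (fst ob) (ray_label H ob 0)"
    and "H (ray_col (snd ob) (Suc k)) (ray_label H ob k) (ray_label H ob (Suc k))"
proof -
  note nbr = some_H_nbr[OF assms(1) ray_col_range[OF assms(2)]]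
  show lt: "ray_label H ob k < idg_size R \<Delta>" for k
    by (induction k) (use nbr assms(3) in auto)
  show "H (ray_col (snd ob) 0) (fst ob) (ray_label H ob 0)" using nbr assms(3) by simp
  show "H (ray_col (snd ob) (Suc k)) (ray_label H ob k) (ray_label H ob (Suc k))"
    using nbr lt by simp
qed

text \<open>Tree nodes are Inl x; the k-th node of the ray attached at a node l of degree at most one is
  Inr (l, k).\<close>

definition ext_V :: "'v set \<Rightarrow> ('v \<Rightarrow> 'v \<Rightarrow> bool) \<Rightarrow> ('v \<Rightarrow> 'v \<Rightarrow> nat) \<Rightarrow> ('v + 'v \<times> nat) set" where
  "ext_V V E col = Inl ` V \<union> {Inr (l, k) | l k. l \<in> V \<and> leafy E col l}"

fun ext_E :: "'v set \<Rightarrow> ('v \<Rightarrow> 'v \<Rightarrow> bool) \<Rightarrow> ('v \<Rightarrow> 'v \<Rightarrow> nat) \<Rightarrow>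
    'v + 'v \<times> nat \<Rightarrow> 'v + 'v \<times> nat \<Rightarrow> bool" where
  "ext_E V E col (Inl x) (Inl y) = E x y"
| "ext_E V E col (Inl x) (Inr (l, k)) = (x = l \<and> k = 0 \<and> l \<in> V \<and> leafy E col l)"
| "ext_E V E col (Inr (l, k)) (Inl x) = (x = l \<and> k = 0 \<and> l \<in> V \<and> leafy E col l)"
| "ext_E V E col (Inr (l, k)) (Inr (l', k')) = (l = l' \<and> l \<in> V \<and> leafy E col l \<and> (k' = Suc k \<or> k = Suc k'))"

fun ext_col :: "('v \<Rightarrow> 'v \<Rightarrow> bool) \<Rightarrow> ('v \<Rightarrow> 'v \<Rightarrow> nat) \<Rightarrow> 'v + 'v \<times> nat \<Rightarrow> 'v + 'v \<times> nat \<Rightarrow> nat" where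
  "ext_col E col (Inl x) (Inl y) = col x y"
| "ext_col E col (Inl x) (Inr (l, k)) = ray_col (colors E col l) 0"
| "ext_col E col (Inr (l, k)) (Inl x) = ray_col (colors E col l) 0"
| "ext_col E col (Inr (l, k)) (Inr (l', k')) = ray_col (colors E col l) (Suc (min k k'))"

fun ext_h :: "(nat \<Rightarrow> nat \<Rightarrow> nat \<Rightarrow> bool) \<Rightarrow> ('v \<Rightarrow> 'v \<Rightarrow> bool) \<Rightarrow> ('v \<Rightarrow> 'v \<Rightarrow> nat) \<Rightarrow> ('v \<Rightarrow> nat) \<Rightarrow>
    'v + 'v \<times> nat \<Rightarrow> nat" where
  "ext_h H E col h (Inl x) = h x"
| "ext_h H E col h (Inr (l, k)) = ray_label H (obs E col h l) k"

definition ray_prev :: "'v \<Rightarrow> nat \<Rightarrow> 'v + 'v \<times> nat" where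
  "ray_prev l k = (if k = 0 then Inl l else Inr (l, k - 1))"

lemma ext_E_Inl_iff:
  "ext_E V E col (Inl x) w \<longleftrightarrow> (\<exists>y. w = Inl y \<and> E x y) \<or> (w = Inr (x, 0) \<and> x \<in> V \<and> leafy E col x)"
  by (cases w) auto

lemma ext_E_Inr_iff:
  "ext_E V E col (Inr (l, k)) w \<longleftrightarrow> l \<in> V \<and> leafy E col l \<and> (w = Inr (l, Suc k) \<or> w = ray_prev l k)"
  unfolding ray_prev_def by (cases w) auto

lemma ext_col_ray_prev: "ext_col E col (Inr (l, k)) (ray_prev l k) = ray_col (colors E col l) k"
  unfolding ray_prev_def by (cases k) auto

locale ray_extension =
  fixes V :: "'v set" and E :: "'v \<Rightarrow> 'v \<Rightarrow> bool" and col :: "'v \<Rightarrow> 'v \<Rightarrow> nat" and h :: "'v \<Rightarrow> nat"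
    and H :: "nat \<Rightarrow> nat \<Rightarrow> nat \<Rightarrow> bool" and R \<Delta> :: nat
  assumes tree: "is_tree V E" and deg: "max_deg_le V E \<Delta>" and pc: "proper_edge_col E col \<Delta>"
    and lab: "proper_H_labeling H R \<Delta> V E col h" and ID: "is_ID_graph R \<Delta> H" and Delta2: "2 \<le> \<Delta>"
begin

abbreviation "Vr \<equiv> ext_V V E col"
abbreviation "Er \<equiv> ext_E V E col"
abbreviation "colr \<equiv> ext_col E col"
abbreviation "hr \<equiv> ext_h H E col h"

lemma finite_colors: "x \<in> V \<Longrightarrow> finite (colors E col x)"
  using deg unfolding max_deg_le_def colors_eq_image by blast

lemma leafy_ray_col_notin: "x \<in> V \<Longrightarrow> leafy E col x \<Longrightarrow> ray_col (colors E col x) 0 \<notin> colors E col x"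
  using ray_col_0_notin finite_colors unfolding leafy_def by blast

lemma ext_E_in: "Er a b \<Longrightarrow> a \<in> Vr \<and> b \<in> Vr"
  using tree_edge_in[OF tree] by (cases a; cases b) (auto simp: ext_V_def)

lemma ext_E_sym: "Er a b \<Longrightarrow> Er b a"
  using tree_edge_sym[OF tree] by (cases a; cases b) auto

lemma ext_E_irrefl: "\<not> Er a a"
  using tree_edge_irrefl[OF tree] by (cases a) auto

lemma ext_connected_in:
  assumes "u \<in> V" "z \<in> Vr"
  shows "connected_in Er Vr (Inl u) z"
proof -
  have tree_part: "connected_in Er Vr (Inl u) (Inl y)" if y: "y \<in> V" for y
  proof -
    obtain xs where xs: "xs \<noteq> []" "hd xs = u" "last xs = y" "walk_path E xs"
      using tree_walk[OF tree assms(1) y] by blast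
    have "set xs \<subseteq> V" using walk_path_subset[OF xs(4) tree_edge_in[OF tree] xs(1)] xs(2) assms(1) by simp
    then have "set (map Inl xs) \<subseteq> Vr" by (auto simp: ext_V_def)
    moreover have "walk_path Er (map Inl xs)" using xs(4) by (simp add: walk_path_map)
    ultimately show ?thesis
      unfolding connected_in_def using xs by (intro exI[of _ "map Inl xs"]) (simp add: hd_map last_map)
  qed
  show ?thesis
  proof (cases z)
    case (Inl y)
    then show ?thesis using assms(2) tree_part unfolding ext_V_def by blast
  next
    case (Inr p)
    then obtain l k where z: "z = Inr (l, k)" "l \<in> V" "leafy E col l"
      using assms(2) unfolding ext_V_def by auto
    have ray_in: "Inr (l, k') \<in> Vr" for k' using z(2,3) unfolding ext_V_def by blast
    have "connected_in Er Vr (Inl u) (Inr (l, k))"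
    proof (induction k)
      case 0
      show ?case by (rule connected_in_step[OF tree_part[OF z(2)] _ ray_in]) (simp add: z(2,3))
    next
      case (Suc k)
      show ?case by (rule connected_in_step[OF Suc _ ray_in]) (simp add: z(2,3))
    qed
    then show ?thesis using z by simp
  qed
qed

text \<open>A cycle through a ray would need two neighbours at its farthest ray node.\<close>

lemma ext_no_cycle:
  assumes "3 \<le> length xs" "distinct xs" "walk_path Er xs" "Er (last xs) (hd xs)"
  shows False
proof (cases "\<exists>l k. Inr (l, k) \<in> set xs")
  case True
  define K where "K = Max {k. \<exists>l. Inr (l, k) \<in> set xs}"
  have "{k. \<exists>l. Inr (l, k) \<in> set xs} \<subseteq> (\<lambda>z. case z of Inr (l, k) \<Rightarrow> k | Inl _ \<Rightarrow> 0) ` set xs"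
    by (auto intro!: image_eqI)
  then have fin: "finite {k. \<exists>l. Inr (l, k) \<in> set xs}" by (rule finite_subset) simp
  then obtain l where l: "Inr (l, K) \<in> set xs"
    using Max_in[OF fin] True unfolding K_def by auto
  have "k \<le> K" if "Inr (l', k) \<in> set xs" for l' k unfolding K_def using fin that by (auto intro: Max_ge)
  then have "z = ray_prev l K" if "z \<in> set xs" "Er (Inr (l, K)) z" for z
    using that unfolding ext_E_Inr_iff by fastforce
  then show False
    using cycle_two_nbrs[of Er, OF ext_E_sym assms(2,1,3,4) l] by metis
next
  case False
  then obtain ys where xs: "xs = map Inl ys"
    by (metis ex_map_conv old.prod.exhaust sum.exhaust_sel isl_def)
  have "ys \<noteq> []" using assms(1) xs by auto
  then show False
    using tree_no_cycle[OF tree, of ys] assms xs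
    by (simp add: walk_path_map distinct_map hd_map last_map)
qed

lemma ext_tree: "is_tree Vr Er"
  unfolding is_tree_def
proof (intro conjI)
  show "\<forall>a\<in>Vr. \<forall>b\<in>Vr. \<exists>xs. xs \<noteq> [] \<and> hd xs = a \<and> last xs = b \<and> walk_path Er xs"
  proof (intro ballI)
    fix a b assume a: "a \<in> Vr" and b: "b \<in> Vr"
    obtain u where u: "u \<in> V" using a unfolding ext_V_def by auto
    show "\<exists>xs. xs \<noteq> [] \<and> hd xs = a \<and> last xs = b \<and> walk_path Er xs"
      using connected_in_walk[OF ext_E_sym ext_connected_in[OF u a] ext_connected_in[OF u b]] by blast
  qed
  show "\<forall>a b. Er a b \<longrightarrow> a \<in> Vr \<and> b \<in> Vr" using ext_E_in by blast
  show "\<forall>a b. Er a b \<longrightarrow> Er b a" using ext_E_sym by blast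
  show "\<forall>a. \<not> Er a a" using ext_E_irrefl by blast
  show "\<nexists>xs. 3 \<le> length xs \<and> distinct xs \<and> walk_path Er xs \<and> Er (last xs) (hd xs)"
    using ext_no_cycle by blast
qed

lemma ext_max_deg: "max_deg_le Vr Er \<Delta>"
  unfolding max_deg_le_def
proof
  fix a assume "a \<in> Vr"
  show "finite {w. Er a w} \<and> card {w. Er a w} \<le> \<Delta>"
  proof (cases a)
    case (Inl x)
    then have x: "x \<in> V" using \<open>a \<in> Vr\<close> unfolding ext_V_def by auto
    have fin: "finite {y. E x y}" "card {y. E x y} \<le> \<Delta>" using deg x unfolding max_deg_le_def by auto
    have card_Inl: "card (Inl ` {y. E x y} :: ('v + 'v \<times> nat) set) = card {y. E x y}"
      by (simp add: card_image)
    show ?thesis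
    proof (cases "leafy E col x")
      case True
      then have "{w. Er a w} = insert (Inr (x, 0)) (Inl ` {y. E x y})"
        using Inl x by (auto simp: ext_E_Inl_iff)
      moreover have "card {y. E x y} \<le> 1" using True card_colors[OF pc] unfolding leafy_def by simp
      moreover have "card (insert (Inr (x, 0)) (Inl ` {y. E x y})) \<le> \<Delta>"
        by (rule card_insert_le_m1) (use Delta2 \<open>card {y. E x y} \<le> 1\<close> in \<open>simp_all add: card_image\<close>)
      ultimately show ?thesis using fin(1) by simp
    next
      case False
      then have "{w. Er a w} = Inl ` {y. E x y}" using Inl by (auto simp: ext_E_Inl_iff)
      then show ?thesis using fin card_Inl by simp
    qed
  next
    case (Inr p)
    then obtain l k where "a = Inr (l, k)" by (cases p) auto
    then have sub: "{w. Er a w} \<subseteq> {Inr (l, Suc k), ray_prev l k}" by (auto simp: ext_E_Inr_iff)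
    have "card {Inr (l, Suc k), ray_prev l k} \<le> 2" by (simp add: card_insert_if)
    then show ?thesis using Delta2 card_mono[OF _ sub] finite_subset[OF sub] by fastforce
  qed
qed

lemma ext_edge_col_Inl:
  "Er (Inl x) w \<and> colr (Inl x) w = c \<longleftrightarrow>
     (\<exists>y. w = Inl y \<and> E x y \<and> col x y = c) \<or>
     (w = Inr (x, 0) \<and> x \<in> V \<and> leafy E col x \<and> c = ray_col (colors E col x) 0)"
  by (cases w) auto

lemma ext_edge_col_Inr:
  "Er (Inr (l, k)) w \<and> colr (Inr (l, k)) w = c \<longleftrightarrow> l \<in> V \<and> leafy E col l \<and>
     (w = Inr (l, Suc k) \<and> c = ray_col (colors E col l) (Suc k) \<or>
      w = ray_prev l k \<and> c = ray_col (colors E col l) k)"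
  using ext_col_ray_prev[of E col l k] unfolding ext_E_Inr_iff by auto

lemma ext_proper_edge_col: "proper_edge_col Er colr \<Delta>"
  unfolding proper_edge_col_def
proof (intro conjI allI impI)
  fix a b assume "Er a b"
  then show "colr a b = colr b a"
    using pc unfolding proper_edge_col_def by (cases a; cases b) (auto simp: min.commute)
  show "colr a b \<in> {1..\<Delta>}"
    using \<open>Er a b\<close> pc ray_col_range[OF Delta2] unfolding proper_edge_col_def
    by (cases a; cases b) auto
next
  fix a b b' assume edges: "Er a b \<and> Er a b' \<and> colr a b = colr a b'"
  show "b = b'"
  proof (cases a)
    case (Inl x)
    define c where "c = colr a b"
    have "(\<exists>y. w = Inl y \<and> E x y \<and> col x y = c) \<or>
          (w = Inr (x, 0) \<and> x \<in> V \<and> leafy E col x \<and> c = ray_col (colors E col x) 0)"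
      if "w \<in> {b, b'}" for w
      using edges that ext_edge_col_Inl[of x w c] unfolding Inl c_def by auto
    moreover have "col x y \<noteq> ray_col (colors E col x) 0" if "E x y" "x \<in> V" "leafy E col x" for y
      using leafy_ray_col_notin[OF that(2,3)] that(1) unfolding colors_def by blast
    moreover have "y = y'" if "E x y" "E x y'" "col x y = col x y'" for y y'
      using pc that unfolding proper_edge_col_def by blast
    ultimately show ?thesis by (metis insertCI)
  next
    case (Inr p)
    then obtain l k where "a = Inr (l, k)" by (cases p) auto
    then show ?thesis using edges ext_edge_col_Inr[of l k] ray_col_Suc_neq by metis
  qed
qed

lemma nbr_ext_Inl:
  "nbr Er colr (Inl x) c =
     (if c \<in> colors E col x then map_option Inl (nbr E col x c)
      else if x \<in> V \<and> leafy E col x \<and> c = ray_col (colors E col x) 0 then Some (Inr (x, 0)) else None)"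
proof (rule nbr_eqI[OF ext_proper_edge_col])
  fix w
  show "Er (Inl x) w \<and> colr (Inl x) w = c \<longleftrightarrow> (if c \<in> colors E col x then map_option Inl (nbr E col x c)
      else if x \<in> V \<and> leafy E col x \<and> c = ray_col (colors E col x) 0 then Some (Inr (x, 0)) else None) = Some w"
    unfolding ext_edge_col_Inl using nbr_eq_Some_iff[OF pc] leafy_ray_col_notin
    by (auto simp: colors_def)
qed

lemma nbr_ext_Inr:
  assumes "l \<in> V" "leafy E col l"
  shows "nbr Er colr (Inr (l, k)) c =
     (if c = ray_col (colors E col l) k then Some (ray_prev l k)
      else if c = ray_col (colors E col l) (Suc k) then Some (Inr (l, Suc k)) else None)"
  by (rule nbr_eqI[OF ext_proper_edge_col])
    (use assms ray_col_Suc_neq in \<open>auto simp: ext_edge_col_Inr\<close>)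

lemma colors_ext_Inl:
  "x \<in> V \<Longrightarrow> colors Er colr (Inl x) =
     (if leafy E col x then insert (ray_col (colors E col x) 0) (colors E col x) else colors E col x)"
  using nbr_eq_None_iff[of E col x] by (auto simp: colors_eq_nbr[of Er] nbr_ext_Inl)

lemma colors_ext_Inr:
  "l \<in> V \<Longrightarrow> leafy E col l \<Longrightarrow> colors Er colr (Inr (l, k)) = {1, 2}"
  using ray_col_pair[of "colors E col l" k]
  by (auto simp: colors_eq_nbr[of Er] nbr_ext_Inr)

lemma ext_labeling: "proper_H_labeling H R \<Delta> Vr Er colr hr"
  unfolding proper_H_labeling_def
proof (intro conjI allI impI ballI)
  have lt: "fst (obs E col h l) < idg_size R \<Delta>" if "l \<in> V" for l
    using lab that unfolding proper_H_labeling_def by simp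
  note ray = ray_label[OF ID Delta2 lt]
  fix a assume "a \<in> Vr"
  then show "hr a < idg_size R \<Delta>"
    using lab ray unfolding proper_H_labeling_def ext_V_def by auto
next
  have lt: "fst (obs E col h l) < idg_size R \<Delta>" if "l \<in> V" for l
    using lab that unfolding proper_H_labeling_def by simp
  note ray = ray_label[OF ID Delta2 lt]
  fix a b assume "Er a b"
  then show "H (colr a b) (hr a) (hr b)"
    using lab ray ID_graph_sym[OF ID] unfolding proper_H_labeling_def
    by (cases a; cases b) (auto simp: min_def)
qed

lemma ext_infinite:
  assumes "u \<in> V"
  shows "infinite Vr"
proof (cases "finite V")
  case True
  obtain l where l: "l \<in> V" "\<forall>a b. E l a \<and> E l b \<longrightarrow> a = b"
    using finite_tree_has_leaf[OF tree True assms] by blast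
  have "finite {y. E l y}" using deg l(1) unfolding max_deg_le_def by blast
  then have "card {y. E l y} \<le> 1" using card_le_Suc0_iff_eq l(2) by auto
  then have "leafy E col l" unfolding leafy_def using card_colors[OF pc] by simp
  then have "range (\<lambda>k. Inr (l, k)) \<subseteq> Vr" using l(1) unfolding ext_V_def by auto
  moreover have "infinite (range (\<lambda>k. Inr (l, k)) :: ('v + 'v \<times> nat) set)"
    using finite_imageD[of "\<lambda>k. Inr (l, k)" UNIV] by (auto simp: inj_on_def)
  ultimately show ?thesis using finite_subset by blast
next
  case False
  then have "infinite (Inl ` V :: ('v + 'v \<times> nat) set)" by (simp add: finite_image_iff)
  then show ?thesis using finite_subset[of "Inl ` V" Vr] unfolding ext_V_def by blast
qed

end

section \<open>Simulation in the LOCAL model\<close>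

lemma walk_snoc: "walk E col v (p @ [c]) = Option.bind (walk E col v p) (\<lambda>x. nbr E col x c)"
  by (induction p arbitrary: v) (auto split: option.split)

lemma view_Nil: "view E col h t v [] = Some (obs E col h v)"
  unfolding view_def by simp

text \<open>Positions in the extended tree, relative to the centre v of a view: the tree node reached
  from v along the colour sequence p, or the k-th node of the ray attached there.\<close>

datatype epos = Tree "nat list" | Ray "nat list" nat

fun epos_path :: "epos \<Rightarrow> nat list" where
  "epos_path (Tree p) = p"
| "epos_path (Ray p k) = p"

definition epos_step :: "(nat list \<Rightarrow> (nat \<times> nat set) option) \<Rightarrow> epos \<Rightarrow> nat \<Rightarrow> epos option" where
  "epos_step vw q c = (case q of
     Tree p \<Rightarrow> (case vw p of None \<Rightarrow> None | Some ob \<Rightarrow>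
       if c \<in> snd ob then Some (Tree (p @ [c]))
       else if card (snd ob) \<le> 1 \<and> c = ray_col (snd ob) 0 then Some (Ray p 0) else None)
   | Ray p k \<Rightarrow> (case vw p of None \<Rightarrow> None | Some ob \<Rightarrow>
       if c = ray_col (snd ob) k then Some (if k = 0 then Tree p else Ray p (k - 1))
       else if c = ray_col (snd ob) (Suc k) then Some (Ray p (Suc k)) else None))"

definition epos_obs :: "(nat \<Rightarrow> nat \<Rightarrow> nat \<Rightarrow> bool) \<Rightarrow> (nat list \<Rightarrow> (nat \<times> nat set) option) \<Rightarrow> epos \<Rightarrow> nat \<times> nat set" where
  "epos_obs H vw q = (case q of
     Tree p \<Rightarrow> (case vw p of None \<Rightarrow> undefined | Some ob \<Rightarrow>
       (fst ob, if card (snd ob) \<le> 1 then insert (ray_col (snd ob) 0) (snd ob) else snd ob))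
   | Ray p k \<Rightarrow> (case vw p of None \<Rightarrow> undefined | Some ob \<Rightarrow> (ray_label H ob k, {1, 2})))"

text \<open>The run of a VOLUME algorithm on the extended tree, simulated inside a view.\<close>

fun sim_exec :: "volume_alg \<Rightarrow> nat \<Rightarrow> (nat \<Rightarrow> nat \<Rightarrow> nat \<Rightarrow> bool) \<Rightarrow> (nat list \<Rightarrow> (nat \<times> nat set) option) \<Rightarrow>
    nat \<Rightarrow> epos list \<Rightarrow> nat set option" where
  "sim_exec A n H vw 0 qs =
     (case A n (map (epos_obs H vw) qs) of VOutput S \<Rightarrow> Some S | VProbe i c \<Rightarrow> None)"
| "sim_exec A n H vw (Suc k) qs =
     (case A n (map (epos_obs H vw) qs) of
        VOutput S \<Rightarrow> Some S
      | VProbe i c \<Rightarrow>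
          (if i < length qs then
             (case epos_step vw (qs ! i) c of
                Some q \<Rightarrow> sim_exec A n H vw k (qs @ [q])
              | None \<Rightarrow> None)
           else None))"

context ray_extension
begin

fun epos_node :: "'v \<Rightarrow> epos \<Rightarrow> 'v + 'v \<times> nat" where
  "epos_node v (Tree p) = Inl (the (walk E col v p))"
| "epos_node v (Ray p k) = Inr (the (walk E col v p), k)"

fun epos_valid :: "'v \<Rightarrow> epos \<Rightarrow> bool" where
  "epos_valid v (Tree p) \<longleftrightarrow> walk E col v p \<noteq> None"
| "epos_valid v (Ray p k) \<longleftrightarrow> (\<exists>l. walk E col v p = Some l \<and> leafy E col l)"

lemma walk_in_V: "v \<in> V \<Longrightarrow> walk E col v p = Some x \<Longrightarrow> x \<in> V"
proof (induction p arbitrary: v)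
  case (Cons c p)
  then obtain w where "nbr E col v c = Some w" "walk E col w p = Some x"
    by (auto split: option.splits)
  then show ?case using Cons nbr_eq_Some_iff[OF pc] tree_edge_in[OF tree] by blast
qed simp

lemma epos_obs_eq:
  assumes "v \<in> V" "epos_valid v q" "length (epos_path q) \<le> t"
  shows "epos_obs H (view E col h t v) q = obs Er colr hr (epos_node v q)"
proof (cases q)
  case (Tree p)
  then obtain x where x: "walk E col v p = Some x" using assms(2) by auto
  then have "x \<in> V" "view E col h t v p = Some (obs E col h x)"
    using walk_in_V assms Tree unfolding view_def by auto
  then show ?thesis using Tree x by (simp add: epos_obs_def obs_def colors_ext_Inl leafy_def)
next
  case (Ray p k)
  then obtain l where l: "walk E col v p = Some l" "leafy E col l" using assms(2) by auto
  then have "l \<in> V" "view E col h t v p = Some (obs E col h l)"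
    using walk_in_V assms Ray unfolding view_def by auto
  then show ?thesis using Ray l by (simp add: epos_obs_def obs_def colors_ext_Inr)
qed

lemma epos_step_eq:
  assumes "v \<in> V" "epos_valid v q" "length (epos_path q) \<le> t"
  shows "case epos_step (view E col h t v) q c of
           None \<Rightarrow> nbr Er colr (epos_node v q) c = None
         | Some q' \<Rightarrow> epos_valid v q' \<and> length (epos_path q') \<le> Suc (length (epos_path q)) \<and>
                     nbr Er colr (epos_node v q) c = Some (epos_node v q')"
proof (cases q)
  case (Tree p)
  then obtain x where x: "walk E col v p = Some x" using assms(2) by auto
  then have "x \<in> V" "view E col h t v p = Some (obs E col h x)"
    using walk_in_V assms Tree unfolding view_def by auto
  moreover have "walk E col v (p @ [c]) = nbr E col x c" using x by (simp add: walk_snoc)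
  ultimately show ?thesis
    using Tree x nbr_eq_None_iff[of E col x c]
    by (auto simp: epos_step_def nbr_ext_Inl leafy_def split: option.split)
next
  case (Ray p k)
  then obtain l where l: "walk E col v p = Some l" "leafy E col l" using assms(2) by auto
  then have "l \<in> V" "view E col h t v p = Some (obs E col h l)"
    using walk_in_V assms Ray unfolding view_def by auto
  then show ?thesis using Ray l by (auto simp: epos_step_def nbr_ext_Inr ray_prev_def)
qed

lemma sim_exec_eq_vexec:
  assumes "v \<in> V" "\<forall>q\<in>set qs. epos_valid v q \<and> length (epos_path q) + k \<le> t"
  shows "sim_exec A n H (view E col h t v) k qs = vexec A n Er colr hr k (map (epos_node v) qs)"
  using assms(2)
proof (induction k arbitrary: qs)
  case 0
  then have "map (epos_obs H (view E col h t v)) qs = map (obs Er colr hr) (map (epos_node v) qs)"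
    using epos_obs_eq[OF assms(1)] by auto
  then show ?case by (simp only: sim_exec.simps vexec.simps)
next
  case (Suc k)
  have obs: "map (epos_obs H (view E col h t v)) qs = map (obs Er colr hr) (map (epos_node v) qs)"
    using epos_obs_eq[OF assms(1)] Suc.prems by auto
  show ?case
  proof (cases "\<exists>i c. A n (map (epos_obs H (view E col h t v)) qs) = VProbe i c \<and> i < length qs")
    case True
    then obtain i c where probe: "A n (map (epos_obs H (view E col h t v)) qs) = VProbe i c" "i < length qs"
      by blast
    have qi: "epos_valid v (qs ! i)" "length (epos_path (qs ! i)) + Suc k \<le> t"
      using Suc.prems probe(2) nth_mem by blast+
    have "length (epos_path (qs ! i)) \<le> t" using qi(2) by simp
    note step = epos_step_eq[OF assms(1) qi(1) this, of c]
    show ?thesis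
    proof (cases "epos_step (view E col h t v) (qs ! i) c")
      case (Some q')
      then have "\<forall>q\<in>set (qs @ [q']). epos_valid v q \<and> length (epos_path q) + k \<le> t"
        using Suc.prems step qi(2) by auto
      from Suc.IH[OF this] show ?thesis using step Some probe obs qi(2) by (simp del: map_map)
    qed (use step probe obs qi(2) in \<open>simp del: map_map\<close>)
  qed (use obs in \<open>auto simp del: map_map split: vaction.split\<close>)
qed

end

lemma volume_solves_SOD:
  fixes V :: "nat set"
  assumes "volume_solves_SO A f d \<Delta>" "finite V" "card V = n" "is_tree V E" "max_deg_le V E \<Delta>"
    "proper_edge_col E col \<Delta>" "proper_H_labeling (Hid n \<Delta>) n \<Delta> V E col h"
  shows "\<forall>v\<in>V. vexec A n E col h (f n) [v] \<noteq> None"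
    and "sinkless_orientation d V E col (\<lambda>v. the (vexec A n E col h (f n) [v]))"
  using assms(1)[unfolded volume_solves_SO_def, THEN spec[of _ n], THEN spec[of _ V], THEN spec[of _ E],
      THEN spec[of _ col], THEN spec[of _ h]] assms(2-)
  by simp_all

context ray_extension
begin

lemma traces_of_edge:
  fixes A :: volume_alg and n t :: nat
  assumes uw: "E u w"
  defines "D \<equiv> set (vtrace A n Er colr hr t [Inl u]) \<union> set (vtrace A n Er colr hr t [Inl w])"
  shows "finite D" "D \<subseteq> Vr" "Inl u \<in> D" "Inl w \<in> D" "card D \<le> 2 * (t + 1)"
    and "\<forall>y\<in>D. connected_in Er D (Inl u) y" "\<forall>x\<in>D. \<exists>z\<in>D. Er x z"
proof -
  define Tu where "Tu = set (vtrace A n Er colr hr t [Inl u])"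
  define Tw where "Tw = set (vtrace A n Er colr hr t [Inl w])"
  have D: "D = Tu \<union> Tw" unfolding D_def Tu_def Tw_def ..
  show "finite D" unfolding D Tu_def Tw_def by simp
  have uw_r: "Er (Inl u) (Inl w)" "Inl u \<noteq> Inl w" using uw tree_edge_irrefl[OF tree] by auto
  have "Inl u \<in> Tu" "Inl w \<in> Tw"
    unfolding Tu_def Tw_def using set_subset_vtrace[of "[Inl _]"] by auto
  then show in_D: "Inl u \<in> D" "Inl w \<in> D" unfolding D by auto
  have trace_in: "\<forall>y\<in>set (vtrace A n Er colr hr t [x]). y \<in> Vr" if "x \<in> Vr" for x
    by (rule vtrace_induct[OF ext_proper_edge_col]) (use that ext_E_in in auto)
  show "D \<subseteq> Vr" using trace_in ext_E_in[OF uw_r(1)] unfolding D Tu_def Tw_def by blast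
  have card_trace: "card (set (vtrace A n Er colr hr t [x])) \<le> t + 1" for x
    using card_length[of "vtrace A n Er colr hr t [x]"] length_vtrace_le[of A n Er colr hr t "[x]"] by simp
  have "card D \<le> card Tu + card Tw" unfolding D by (rule card_Un_le)
  also have "\<dots> \<le> 2 * (t + 1)"
    using card_trace[of "Inl u"] card_trace[of "Inl w"] unfolding Tu_def Tw_def by simp
  finally show "card D \<le> 2 * (t + 1)" .
  show conn: "\<forall>y\<in>D. connected_in Er D (Inl u) y"
  proof
    fix y assume "y \<in> D"
    have from_u: "\<forall>y\<in>Tu. connected_in Er D (Inl u) y"
      using vtrace_connected_in[OF ext_proper_edge_col] unfolding Tu_def D by blast
    have from_w: "\<forall>y\<in>Tw. connected_in Er D (Inl w) y"
      using vtrace_connected_in[OF ext_proper_edge_col] unfolding Tw_def D by blast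
    have "connected_in Er D (Inl u) (Inl w)"
      using connected_in_step[OF connected_in_refl[of _ _ Er, OF in_D(1)] uw_r(1) in_D(2)] .
    then show "connected_in Er D (Inl u) y"
      using \<open>y \<in> D\<close> from_u connected_in_trans[OF _ from_w[rule_format]] unfolding D by blast
  qed
  show "\<forall>x\<in>D. \<exists>z\<in>D. Er x z"
  proof
    fix x assume "x \<in> D"
    show "\<exists>z\<in>D. Er x z"
    proof (cases "x = Inl u")
      case False
      then show ?thesis using connected_in_has_nbr[OF ext_E_sym conn \<open>x \<in> D\<close> in_D(1)] by blast
    qed (use in_D(2) uw_r(1) in blast)
  qed
qed

lemma adjacent_runs_in_nat_tree:
  assumes uw: "E u w" and n: "2 * (t + 1) * \<Delta> \<le> n"
  shows "\<exists>(V' :: nat set) E' col' h' u' w'. finite V' \<and> card V' = n \<and> is_tree V' E' \<and>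
     max_deg_le V' E' \<Delta> \<and> proper_edge_col E' col' \<Delta> \<and> proper_H_labeling H R \<Delta> V' E' col' h' \<and>
     u' \<in> V' \<and> w' \<in> V' \<and> E' u' w' \<and> col' u' w' = col u w \<and>
     colors E' col' u' = colors Er colr (Inl u) \<and>
     vexec A n E' col' h' t [u'] = vexec A n Er colr hr t [Inl u] \<and>
     vexec A n E' col' h' t [w'] = vexec A n Er colr hr t [Inl w]"
proof -
  define Tu where "Tu = set (vtrace A n Er colr hr t [Inl u])"
  define Tw where "Tw = set (vtrace A n Er colr hr t [Inl w])"
  define D where "D = Tu \<union> Tw"
  note D = traces_of_edge[OF uw, where A = A and n = n and t = t, folded Tu_def Tw_def, folded D_def]
  have "card D * \<Delta> \<le> n" using D(5) n by (meson le_trans mult_le_mono1)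
  have "u \<in> V" using tree_edge_in[OF tree uw] by blast
  obtain \<sigma> :: "_ \<Rightarrow> nat" and V' E' col' h' where T: "finite V'" "card V' = n" "is_tree V' E'"
    "max_deg_le V' E' \<Delta>" "proper_edge_col E' col' \<Delta>" "proper_H_labeling H R \<Delta> V' E' col' h'"
    and emb: "local_embedding_on D \<sigma> Er colr hr E' col' h'"
    using finite_part_in_nat_tree[OF ext_tree ext_infinite[OF \<open>u \<in> V\<close>] ext_max_deg ext_proper_edge_col
        ext_labeling D(1,2,3,6,7) \<open>card D * \<Delta> \<le> n\<close>] by blast
  have edge: "E' (\<sigma> (Inl u)) (\<sigma> (Inl w)) \<and> col' (\<sigma> (Inl u)) (\<sigma> (Inl w)) = col u w"
    using local_embedding_on_edge[OF emb D(3)] uw ext_proper_edge_col T(5) by simp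
  have "colors E' col' (\<sigma> (Inl u)) = colors Er colr (Inl u)"
    using local_embedding_on_obs[OF emb D(3)] unfolding obs_def by simp
  moreover have "local_embedding_on Tu \<sigma> Er colr hr E' col' h'" "local_embedding_on Tw \<sigma> Er colr hr E' col' h'"
    using emb unfolding local_embedding_on_def D_def by blast+
  note runs = this[unfolded Tu_def Tw_def, THEN vexec_transfer]
  ultimately show ?thesis
    using T edge tree_edge_in[OF T(3) conjunct1[OF edge]] runs
    by (intro exI[of _ V'] exI[of _ E'] exI[of _ col'] exI[of _ h'] exI[of _ "\<sigma> (Inl u)"] exI[of _ "\<sigma> (Inl w)"]) simp
qed

lemma sim_exec_centre:
  "v \<in> V \<Longrightarrow> sim_exec A n H (view E col h t v) t [Tree []] = vexec A n Er colr hr t [Inl v]"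
  using sim_exec_eq_vexec[of v "[Tree []]" t t A n] by simp

lemma volume_outputs_on_edge:
  assumes uw: "E u w" and n: "2 * (f n + 1) * \<Delta> \<le> n" and solves: "volume_solves_SO A f d \<Delta>"
    and H: "H = Hid n \<Delta>" "R = n"
  shows "\<exists>S1 S2. sim_exec A n H (view E col h (f n) u) (f n) [Tree []] = Some S1 \<and>
     sim_exec A n H (view E col h (f n) w) (f n) [Tree []] = Some S2 \<and>
     (col u w \<in> S1 \<longleftrightarrow> col u w \<notin> S2) \<and> S1 \<subseteq> colors Er colr (Inl u) \<and>
     (d \<le> card (colors Er colr (Inl u)) \<longrightarrow> S1 \<noteq> {})"
proof -
  obtain V' :: "nat set" and E' col' h' u' w' where T: "finite V'" "card V' = n" "is_tree V' E'"
    "max_deg_le V' E' \<Delta>" "proper_edge_col E' col' \<Delta>" "proper_H_labeling H R \<Delta> V' E' col' h'"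
    "u' \<in> V'" "w' \<in> V'" "E' u' w'" "col' u' w' = col u w" "colors E' col' u' = colors Er colr (Inl u)"
    "vexec A n E' col' h' (f n) [u'] = vexec A n Er colr hr (f n) [Inl u]"
    "vexec A n E' col' h' (f n) [w'] = vexec A n Er colr hr (f n) [Inl w]"
    using adjacent_runs_in_nat_tree[OF uw n, of A] by blast
  define S where "S v = the (vexec A n E' col' h' (f n) [v])" for v
  note runs = volume_solves_SOD(1)[OF solves T(1-5) T(6)[unfolded H]]
  have so: "sinkless_orientation d V' E' col' S"
    using volume_solves_SOD(2)[OF solves T(1-5) T(6)[unfolded H]] unfolding S_def .
  have "sim_exec A n H (view E col h (f n) x) (f n) [Tree []] = Some (S x')"
    if "x \<in> V" "x' \<in> V'" "vexec A n E' col' h' (f n) [x'] = vexec A n Er colr hr (f n) [Inl x]" for x x'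
  proof -
    have "vexec A n E' col' h' (f n) [x'] \<noteq> None" using runs that(2) by blast
    then show ?thesis using sim_exec_centre[OF that(1)] that(3) unfolding S_def by auto
  qed
  moreover have "u \<in> V" "w \<in> V" using tree_edge_in[OF tree uw] by auto
  moreover have "col u w \<in> S u' \<longleftrightarrow> col u w \<notin> S w'" "S u' \<subseteq> colors E' col' u'"
    "d \<le> card {y. E' u' y} \<longrightarrow> S u' \<noteq> {}"
    using so T(7,9,10) unfolding sinkless_orientation_def by metis+
  ultimately show ?thesis using T(7,8,11-13) card_colors[OF T(5)] by metis
qed

end

text \<open>The LOCAL algorithm: simulate the VOLUME algorithm on the extended tree around the centre of the
  view, and drop the colour of the virtual ray edge from its output.\<close>

definition local_alg_of :: "volume_alg \<Rightarrow> nat \<Rightarrow> (nat \<Rightarrow> nat \<Rightarrow> nat \<Rightarrow> bool) \<Rightarrow> nat \<Rightarrow> local_alg" where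
  "local_alg_of A n H t vw =
     (case sim_exec A n H vw t [Tree []] of Some S \<Rightarrow> S \<inter> snd (the (vw [])) | None \<Rightarrow> {})"

lemma local_alg_of_sinkless:
  fixes V :: "'w set"
  assumes Delta2: "2 \<le> \<Delta>" and d2: "2 \<le> d" and ID: "is_ID_graph n \<Delta> (Hid n \<Delta>)"
    and n: "2 * (f n + 1) * \<Delta> \<le> n" and solves: "volume_solves_SO A f d \<Delta>"
    and T: "is_tree V E" "max_deg_le V E \<Delta>" "proper_edge_col E col \<Delta>"
      "proper_H_labeling (Hid n \<Delta>) n \<Delta> V E col h"
  shows "sinkless_orientation d V E col (\<lambda>v. local_alg_of A n (Hid n \<Delta>) (f n) (view E col h (f n) v))"
proof -
  interpret ray_extension V E col h "Hid n \<Delta>" n \<Delta> using T ID Delta2 by unfold_locales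
  define L where "L v = local_alg_of A n (Hid n \<Delta>) (f n) (view E col h (f n) v)" for v
  have L_Some: "L v = S \<inter> colors E col v"
    if "sim_exec A n (Hid n \<Delta>) (view E col h (f n) v) (f n) [Tree []] = Some S" for v S
    using that unfolding L_def local_alg_of_def by (simp add: view_Nil)
  have L_sub: "L v \<subseteq> colors E col v" for v
    unfolding L_def local_alg_of_def by (simp add: view_Nil split: option.split)
  have consistent: "col u w \<in> L u \<longleftrightarrow> col u w \<notin> L w" if uw: "E u w" for u w
  proof -
    obtain S1 S2 where S: "sim_exec A n (Hid n \<Delta>) (view E col h (f n) u) (f n) [Tree []] = Some S1"
      "sim_exec A n (Hid n \<Delta>) (view E col h (f n) w) (f n) [Tree []] = Some S2"
      "col u w \<in> S1 \<longleftrightarrow> col u w \<notin> S2"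
      using volume_outputs_on_edge[OF uw n solves refl refl] by blast
    have "col w u = col u w" using pc uw unfolding proper_edge_col_def by metis
    then have "col u w \<in> colors E col u" "col u w \<in> colors E col w"
      using uw tree_edge_sym[OF tree uw] unfolding colors_def by auto
    then show ?thesis unfolding L_Some[OF S(1)] L_Some[OF S(2)] using S(3) by blast
  qed
  have nonsink: "L u \<noteq> {}" if u: "u \<in> V" and deg_u: "d \<le> card {w. E u w}" for u
  proof -
    have "{w. E u w} \<noteq> {}" using deg_u d2 by (intro notI) simp
    then obtain w where uw: "E u w" by blast
    obtain S1 where S1: "sim_exec A n (Hid n \<Delta>) (view E col h (f n) u) (f n) [Tree []] = Some S1"
      "S1 \<subseteq> colors Er colr (Inl u)" "d \<le> card (colors Er colr (Inl u)) \<longrightarrow> S1 \<noteq> {}"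
      using volume_outputs_on_edge[OF uw n solves refl refl] by blast
    have "card (colors E col u) = card {w. E u w}" by (rule card_colors[OF pc])
    then have "\<not> leafy E col u" using deg_u d2 unfolding leafy_def by simp
    then have "colors Er colr (Inl u) = colors E col u" using colors_ext_Inl[OF u] by simp
    then show ?thesis
      using S1(2,3) deg_u \<open>card (colors E col u) = card {w. E u w}\<close> unfolding L_Some[OF S1(1)] by auto
  qed
  show ?thesis
    unfolding sinkless_orientation_def L_def[symmetric] using L_sub consistent nonsink by blast
qed

lemma volume_solves_SO_threshold:
  assumes solves: "volume_solves_SO A f d \<Delta>" and Delta2: "2 \<le> \<Delta>"
    and ID: "is_ID_graph n \<Delta> (Hid n \<Delta>)" and n: "2 * \<Delta> \<le> n"
  shows "2 \<le> d"
proof (rule ccontr)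
  assume "\<not> 2 \<le> d"
  have "0 < idg_size n \<Delta>" using Delta2 unfolding idg_size_def by simp
  then interpret ray_extension "{0 :: nat}" "\<lambda>_ _. False" "\<lambda>_ _. 1" "\<lambda>_. 0" "Hid n \<Delta>" n \<Delta>
    by (intro ray_extension.intro is_tree_singleton ID Delta2)
      (simp_all add: max_deg_le_def proper_edge_col_def proper_H_labeling_def)
  define D where "D = {Inl 0, Inr (0, 0) :: nat + nat \<times> nat}"
  have leaf: "leafy (\<lambda>_ _. False) (\<lambda>_ _. 1) (0 :: nat)" unfolding leafy_def colors_def by simp
  then have D: "D \<subseteq> Vr" "\<forall>x\<in>D. \<exists>z\<in>D. Er x z" unfolding D_def ext_V_def by simp_all
  have root: "connected_in Er D (Inl 0) (Inl 0)" by (rule connected_in_refl) (simp add: D_def)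
  moreover have "connected_in Er D (Inl 0) (Inr (0, 0))"
    by (rule connected_in_step[OF root]) (use leaf in \<open>simp_all add: D_def\<close>)
  ultimately have conn: "\<forall>y\<in>D. connected_in Er D (Inl 0) y" by (simp add: D_def)
  have "card D * \<Delta> \<le> n" using n unfolding D_def by simp
  have "finite D" "Inl 0 \<in> D" unfolding D_def by auto
  obtain V' :: "nat set" and E' col' h' where T: "finite V'" "card V' = n" "is_tree V' E'"
    "max_deg_le V' E' \<Delta>" "proper_edge_col E' col' \<Delta>" "proper_H_labeling (Hid n \<Delta>) n \<Delta> V' E' col' h'"
    using finite_part_in_nat_tree[OF ext_tree ext_infinite[OF insertI1] ext_max_deg ext_proper_edge_col
        ext_labeling \<open>finite D\<close> D(1) \<open>Inl 0 \<in> D\<close> conn D(2) \<open>card D * \<Delta> \<le> n\<close>] by blast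
  have "\<not> card V' \<le> Suc 0" using T(2) n Delta2 by simp
  then obtain a b where "a \<in> V'" "b \<in> V'" "a \<noteq> b" using card_le_Suc0_iff_eq[OF T(1)] by blast
  then have "\<not> sinkless_orientation d V' E' col' S" for S
    using finite_tree_no_sinkless_orientation[OF T(3,1) _ _ _ T(5)] \<open>\<not> 2 \<le> d\<close> by simp
  then show False using volume_solves_SOD(2)[OF solves T] by blast
qed

lemma probe_budget:
  fixes t n \<Delta> :: nat
  assumes "2 \<le> \<Delta>" "6 * \<Delta> \<le> n" "real t \<le> real n / (3 * real \<Delta>)"
  shows "2 * (t + 1) * \<Delta> \<le> n" "t < n"
proof -
  have "real t * (3 * real \<Delta>) \<le> real n" using assms(1,3) by (simp add: pos_le_divide_eq)
  then have "real (3 * (t * \<Delta>)) \<le> real n" by (simp add: ac_simps)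
  then have n3: "3 * (t * \<Delta>) \<le> n" by (simp only: of_nat_le_iff)
  have "2 * (t * \<Delta>) + 2 * \<Delta> \<le> n"
  proof (cases "2 \<le> t")
    case True
    then have "2 * \<Delta> \<le> t * \<Delta>" by (simp add: mult_right_mono)
    then show ?thesis using n3 by linarith
  next
    case False
    then have "t * \<Delta> \<le> \<Delta>" by simp
    then show ?thesis using assms(2) by linarith
  qed
  moreover have "2 * (t + 1) * \<Delta> = 2 * (t * \<Delta>) + 2 * \<Delta>" by (simp add: algebra_simps)
  ultimately show "2 * (t + 1) * \<Delta> \<le> n" by simp
  have "t \<le> t * \<Delta>" using assms(1) by simp
  then show "t < n" using n3 assms(1,2) by linarith
qed

lemma sinkless_orientation_Delta0:
  assumes "is_tree V E" "proper_H_labeling H 1 0 V E col h"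
  shows "sinkless_orientation d V E col S"
proof -
  have "V = {}" using assms(2) unfolding proper_H_labeling_def idg_size_def by auto
  then show ?thesis using tree_edge_in[OF assms(1)] unfolding sinkless_orientation_def by auto
qed

theorem lemma8:
  fixes \<Delta> d :: nat and A :: volume_alg and f :: "nat \<Rightarrow> nat"
  assumes H_exists: "\<exists>R0. \<forall>R\<ge>R0. \<exists>H. is_ID_graph R \<Delta> H"
    and solves: "volume_solves_SO A f d \<Delta>"
    and small: "\<exists>N0. \<forall>n\<ge>N0. real (f n) \<le> real n / (3 * real \<Delta>)"
  shows "\<exists>nstar t (L :: local_alg). t < nstar \<and>
           (\<forall>(V :: 'w set) E col h.
              is_tree V E \<and> max_deg_le V E \<Delta> \<and> proper_edge_col E col \<Delta> \<and>
              proper_H_labeling (Hid nstar \<Delta>) nstar \<Delta> V E col h \<longrightarrow>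
              sinkless_orientation d V E col (\<lambda>v. L (view E col h t v)))"
proof -
  obtain R0 where R0: "\<forall>R\<ge>R0. \<exists>H. is_ID_graph R \<Delta> H" using H_exists by blast
  consider "\<Delta> = 0" | "\<Delta> = 1" | "2 \<le> \<Delta>" by linarith
  then show ?thesis
  proof cases
    case 1
    then have "\<forall>(V :: 'w set) E col h. is_tree V E \<and> max_deg_le V E \<Delta> \<and> proper_edge_col E col \<Delta> \<and>
        proper_H_labeling (Hid 1 \<Delta>) 1 \<Delta> V E col h \<longrightarrow> sinkless_orientation d V E col (\<lambda>_. {})"
      using sinkless_orientation_Delta0 by blast
    then show ?thesis by (intro exI[of _ 1] exI[of _ 0] exI[of _ "\<lambda>_. {}"]) simp
  next
    case 2
    then show ?thesis using R0 no_ID_graph_Delta1 by blast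
  next
    case 3
    obtain N0 where N0: "\<forall>n\<ge>N0. real (f n) \<le> real n / (3 * real \<Delta>)" using small by blast
    define n where "n = max (max R0 N0) (6 * \<Delta>)"
    have ID: "is_ID_graph n \<Delta> (Hid n \<Delta>)" using Hid_is_ID_graph R0 unfolding n_def by simp
    have budget: "2 * (f n + 1) * \<Delta> \<le> n" "f n < n"
      using probe_budget[OF 3 _ N0[rule_format]] unfolding n_def by auto
    have "2 \<le> d" using volume_solves_SO_threshold[OF solves 3 ID] unfolding n_def by simp
    then show ?thesis using local_alg_of_sinkless[OF 3 _ ID budget(1) solves] budget(2) by blast
  qed
qed

end
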